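(* There exist absolute constants $c_1,c_2>0$ such that the following holds. Let $d\ge1$, $\delta>0$, and let $\varphi$ be a random vector in $\mathbb{S}^{d-1}$ for which there exist constants $\alpha\ge1$, $s>0$ with $\Pr(|\langle x,\varphi\rangle|\le t)\le\alpha t^s$ for all $0\le t\le1$ and all $x\in\mathbb{S}^{d-1}$. Let $\varphi_1,\dots,\varphi_N$ be i.i.d. copies of $\varphi$, and $\epsilon_1,\dots,\epsilon_N$ i.i.d. uniform on $[-\delta,\delta]$, independent of the $\varphi_n$; let $P_N=\bigcap_{n=1}^N\{u\in\mathbb{R}^d:|\langle u,\varphi_n\rangle-\epsilon_n|\le\delta\}$ and $W_N=\sup\{\|u\|:u\in P_N\}$. If $N\ge c_2\,d\,\ln\!\big(32(2\alpha)^{1/s}\big)$, then $$\mathbb{E}|W_N|^2\le\frac{c_1\delta^2d^2(2\alpha)^{2/s}\ln^2\!\big(16(2\alpha)^{1/s}\big)}{(N+1)(N+2)}.$$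
   Context: $W_N$ is the worst case error of consistent reconstruction from measurements $q_n=\langle x,\varphi_n\rangle+\epsilon_n$. *)

theory Defs
  imports "HOL-Probability.Probability"
begin

text \<open>Vectors of R^d are represented as (extensional) functions on the index set {..<d};
  the measurable space of R^d is the product of d copies of the Borel line.\<close>

definition Rd :: "nat \<Rightarrow> (nat \<Rightarrow> real) measure" where
  "Rd d = PiM {..<d} (\<lambda>_. (borel :: real measure))"

definition inner_d :: "nat \<Rightarrow> (nat \<Rightarrow> real) \<Rightarrow> (nat \<Rightarrow> real) \<Rightarrow> real" where
  "inner_d d u v = (\<Sum>i<d. u i * v i)"

definition norm_d :: "nat \<Rightarrow> (nat \<Rightarrow> real) \<Rightarrow> real" where
  "norm_d d u = sqrt (\<Sum>i<d. (u i)\<^sup>2)"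

definition sphere_d :: "nat \<Rightarrow> (nat \<Rightarrow> real) set" where
  "sphere_d d = {v \<in> space (Rd d). norm_d d v = 1}"

definition unif_noise :: "real \<Rightarrow> real measure" where
  "unif_noise \<delta> = uniform_measure lborel {-\<delta>..\<delta>}"

text \<open>Joint law of (phi_1,eps_1),...,(phi_N,eps_N): i.i.d. pairs, each pair with law
  mu (x) Unif[-delta,delta], i.e. phi_n i.i.d. copies of phi with law mu,
  eps_n i.i.d. uniform, and the eps independent of the phi.\<close>
definition sample_law :: "nat \<Rightarrow> (nat \<Rightarrow> real) measure \<Rightarrow> real \<Rightarrow>
    (nat \<Rightarrow> (nat \<Rightarrow> real) \<times> real) measure" where
  "sample_law N \<mu> \<delta> = PiM {..<N} (\<lambda>_. \<mu> \<Otimes>\<^sub>M unif_noise \<delta>)"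

text \<open>The consistent set P_N for a sample omega (omega n = (phi_n, eps_n)).\<close>
definition P_N :: "nat \<Rightarrow> nat \<Rightarrow> real \<Rightarrow> (nat \<Rightarrow> (nat \<Rightarrow> real) \<times> real) \<Rightarrow> (nat \<Rightarrow> real) set" where
  "P_N d N \<delta> \<omega> = {u \<in> space (Rd d). \<forall>n<N. \<bar>inner_d d u (fst (\<omega> n)) - snd (\<omega> n)\<bar> \<le> \<delta>}"

definition W_N :: "nat \<Rightarrow> nat \<Rightarrow> real \<Rightarrow> (nat \<Rightarrow> (nat \<Rightarrow> real) \<times> real) \<Rightarrow> ennreal" where
  "W_N d N \<delta> \<omega> = (SUP u \<in> P_N d N \<delta> \<omega>. ennreal (norm_d d u))"

end

theory Submission
  imports Defs
begin

text \<open>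
  If \<open>W_N > r\<close>, scaling a consistent point down (the consistent set is star-shaped around the
  origin on the support of the noise) gives a consistent point of norm exactly \<open>r\<close>, hence a
  point \<open>v\<close> of an \<open>\<eta>\<close>-net of the sphere of radius \<open>r\<close> that is \<open>(\<delta> + \<eta>)\<close>-consistent with all
  \<open>N\<close> independent measurements. A union bound over a net of size \<open>(2r/\<eta> + 1)^d\<close> bounds
  \<open>P(W_N > r)\<close>. With \<open>A = (2\<alpha>)^(1/s)\<close>, anti-concentration at scale \<open>\<eta> = r/(2A)\<close> shows that for
  \<open>r \<le> 4\<delta>A\<close> one measurement is near-consistent with probability at most \<open>1 - r/(8\<delta>A)\<close>, while for
  larger \<open>r\<close> (net scale \<open>\<delta>\<close>) the probability is at most \<open>\<alpha>(3\<delta>/r)^s\<close>. Integrating this tail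
  over the dyadic radii \<open>r\<^sub>0 2^k\<close> with \<open>r\<^sub>0 \<approx> \<delta>A d ln A / N\<close> gives a geometric series of size
  \<open>O(r\<^sub>0\<^sup>2)\<close> plus a term exponentially small in \<open>N\<close>.
\<close>

section \<open>Euclidean geometry on index functions\<close>

lemma norm_d_L2: "norm_d d u = L2_set u {..<d}"
  by (simp add: norm_d_def L2_set_def)

lemma norm_d_triangle: "norm_d d (\<lambda>i. u i + v i) \<le> norm_d d u + norm_d d v"
  unfolding norm_d_L2 by (rule L2_set_triangle_ineq)

lemma abs_inner_d_le: "\<bar>inner_d d u v\<bar> \<le> norm_d d u * norm_d d v"
proof -
  have "\<bar>inner_d d u v\<bar> \<le> (\<Sum>i<d. \<bar>u i\<bar> * \<bar>v i\<bar>)"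
    unfolding inner_d_def by (rule order_trans[OF sum_abs]) (simp add: abs_mult)
  also have "\<dots> \<le> norm_d d u * norm_d d v" unfolding norm_d_L2 by (rule L2_set_mult_ineq)
  finally show ?thesis .
qed

lemma norm_d_scale: "norm_d d (\<lambda>i. c * u i) = \<bar>c\<bar> * norm_d d u"
proof -
  have "(\<Sum>i<d. (c * u i)\<^sup>2) = c\<^sup>2 * (\<Sum>i<d. (u i)\<^sup>2)"
    by (simp add: power_mult_distrib sum_distrib_left)
  then show ?thesis by (simp add: norm_d_def real_sqrt_mult)
qed

lemma norm_d_cong: "(\<And>i. i < d \<Longrightarrow> u i = v i) \<Longrightarrow> norm_d d u = norm_d d v"
  by (simp add: norm_d_def)

lemma inner_d_cong:
  "(\<And>i. i < d \<Longrightarrow> u i = u' i) \<Longrightarrow> (\<And>i. i < d \<Longrightarrow> v i = v' i) \<Longrightarrow> inner_d d u v = inner_d d u' v'"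
  by (simp add: inner_d_def)

lemma inner_d_scale: "inner_d d (\<lambda>i. c * u i) v = c * inner_d d u v"
  by (simp add: inner_d_def sum_distrib_left mult.assoc)

lemma inner_d_diff: "inner_d d (\<lambda>i. u i - w i) v = inner_d d u v - inner_d d w v"
  by (simp add: inner_d_def sum_subtractf left_diff_distrib)

lemma norm_d_diff_commute: "norm_d d (\<lambda>i. x i - y i) = norm_d d (\<lambda>i. y i - x i)"
  using norm_d_scale[of d "-1" "\<lambda>i. x i - y i"] by simp

lemma norm_d_diff_triangle:
  "norm_d d (\<lambda>i. x i - z i) \<le> norm_d d (\<lambda>i. x i - y i) + norm_d d (\<lambda>i. y i - z i)"
  using norm_d_triangle[of d "\<lambda>i. x i - y i" "\<lambda>i. y i - z i"] by simp

lemma abs_inner_d_diff_le_unit: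
  assumes "norm_d d \<phi> = 1"
  shows "\<bar>inner_d d v \<phi> - inner_d d u \<phi>\<bar> \<le> norm_d d (\<lambda>i. u i - v i)"
proof -
  have "\<bar>inner_d d v \<phi> - inner_d d u \<phi>\<bar> = \<bar>inner_d d (\<lambda>i. v i - u i) \<phi>\<bar>"
    by (simp add: inner_d_diff)
  also have "\<dots> \<le> norm_d d (\<lambda>i. v i - u i) * norm_d d \<phi>" by (rule abs_inner_d_le)
  finally show ?thesis using assms by (simp add: norm_d_diff_commute[of d v u])
qed

lemma space_Rd: "space (Rd d) = PiE {..<d} (\<lambda>_. UNIV)"
  by (simp add: Rd_def space_PiM)

definition scale_d :: "nat \<Rightarrow> real \<Rightarrow> (nat \<Rightarrow> real) \<Rightarrow> (nat \<Rightarrow> real)" where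
  "scale_d d c u = (\<lambda>i\<in>{..<d}. c * u i)"

lemma scale_d_in_space: "scale_d d c u \<in> space (Rd d)"
  by (simp add: scale_d_def space_Rd)

lemma norm_d_scale_d: "norm_d d (scale_d d c u) = \<bar>c\<bar> * norm_d d u"
  by (simp add: norm_d_scale[symmetric] scale_d_def cong: norm_d_cong)

lemma inner_d_scale_d: "inner_d d (scale_d d c u) v = c * inner_d d u v"
  by (simp add: inner_d_scale[symmetric] scale_d_def cong: inner_d_cong)

section \<open>Volume of balls and nets on spheres\<close>

definition lborel_d :: "nat \<Rightarrow> (nat \<Rightarrow> real) measure" where
  "lborel_d d = PiM {..<d} (\<lambda>_. lborel)"

lemma space_lborel_d: "space (lborel_d d) = space (Rd d)"
  by (simp add: lborel_d_def space_PiM space_Rd)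

lemma emeasure_lborel_affine_vimage:
  fixes c b :: real
  assumes c: "c > 0" and A: "A \<in> sets borel"
  shows "emeasure lborel ((\<lambda>t. b + c*t) -` A) = ennreal (1/c) * emeasure lborel A"
proof -
  let ?D = "distr lborel borel (\<lambda>x. b + c*x)"
  have "emeasure lborel A = emeasure (density ?D (\<lambda>_. ennreal \<bar>c\<bar>)) A"
    using lborel_real_affine[of c b] c by simp
  also have "\<dots> = ennreal c * emeasure ?D A"
    using A c by (simp add: emeasure_density nn_integral_cmult_indicator)
  also have "emeasure ?D A = emeasure lborel ((\<lambda>t. b + c*t) -` A)"
    using A by (simp add: emeasure_distr)
  finally have eq: "emeasure lborel A = ennreal c * emeasure lborel ((\<lambda>t. b + c*t) -` A)" .
  have "ennreal (1/c) * ennreal c = 1" using c by (simp add: ennreal_mult[symmetric])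
  then show ?thesis unfolding eq by (simp add: mult.assoc[symmetric])
qed

definition affine_d :: "nat \<Rightarrow> (nat \<Rightarrow> real) \<Rightarrow> real \<Rightarrow> (nat \<Rightarrow> real) \<Rightarrow> (nat \<Rightarrow> real)" where
  "affine_d d v c x = (\<lambda>i\<in>{..<d}. v i + c * x i)"

lemma affine_d_measurable: "affine_d d v c \<in> measurable (lborel_d d) (lborel_d d)"
  unfolding affine_d_def lborel_d_def by measurable

lemma emeasure_lborel_d_affine_vimage:
  assumes c: "c > 0" and B: "B \<in> sets (lborel_d d)"
  shows "emeasure (lborel_d d) B = ennreal (c^d) * emeasure (lborel_d d) (affine_d d v c -` B \<inter> space (lborel_d d))"
proof -
  interpret product_sigma_finite "\<lambda>_::nat. lborel :: real measure"
    by (simp add: product_sigma_finite_def sigma_finite_lborel)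
  define P where "P = scale_measure (ennreal (c^d)) (distr (lborel_d d) (lborel_d d) (affine_d d v c))"
  have "P = PiM {..<d} (\<lambda>_. lborel)"
  proof (rule PiM_eqI)
    show "finite {..<d}" by simp
    show "sets P = sets (PiM {..<d} (\<lambda>_. lborel))" by (simp add: P_def lborel_d_def)
  next
    fix A :: "nat \<Rightarrow> real set" assume A: "\<And>i. i \<in> {..<d} \<Longrightarrow> A i \<in> sets lborel"
    have pre: "affine_d d v c -` Pi\<^sub>E {..<d} A \<inter> space (lborel_d d) = Pi\<^sub>E {..<d} (\<lambda>i. (\<lambda>t. v i + c*t) -` A i)"
      by (auto simp: affine_d_def space_lborel_d space_Rd PiE_def Pi_def extensional_def)
    have PiA: "Pi\<^sub>E {..<d} A \<in> sets (lborel_d d)"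
      using A unfolding lborel_d_def by (intro sets_PiM_I_finite) auto
    have "emeasure P (Pi\<^sub>E {..<d} A) = ennreal (c^d) * emeasure (lborel_d d) (Pi\<^sub>E {..<d} (\<lambda>i. (\<lambda>t. v i + c*t) -` A i))"
      using PiA affine_d_measurable by (simp add: P_def emeasure_distr pre)
    also have "emeasure (lborel_d d) (Pi\<^sub>E {..<d} (\<lambda>i. (\<lambda>t. v i + c*t) -` A i)) = (\<Prod>i<d. emeasure lborel ((\<lambda>t. v i + c*t) -` A i))"
      unfolding lborel_d_def using A by (intro emeasure_PiM) (auto intro!: measurable_sets_borel[where M=borel])
    also have "\<dots> = (\<Prod>i<d. ennreal (1/c) * emeasure lborel (A i))"
      using A c by (intro prod.cong refl emeasure_lborel_affine_vimage) auto
    also have "\<dots> = ennreal (1/c) ^ d * (\<Prod>i<d. emeasure lborel (A i))"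
      by (simp add: prod.distrib)
    also have "ennreal (c^d) * (ennreal (1/c) ^ d * (\<Prod>i<d. emeasure lborel (A i))) = (\<Prod>i<d. emeasure lborel (A i))"
    proof -
      have "ennreal (c^d) * ennreal (1/c) ^ d = 1"
        using c by (simp add: ennreal_power[symmetric] ennreal_mult[symmetric] power_mult_distrib[symmetric])
      then show ?thesis by (simp add: mult.assoc[symmetric])
    qed
    finally show "emeasure P (Pi\<^sub>E {..<d} A) = (\<Prod>i\<in>{..<d}. emeasure lborel (A i))" by simp
  qed
  then have "emeasure (lborel_d d) B = emeasure P B" by (simp add: lborel_d_def)
  also have "\<dots> = ennreal (c^d) * emeasure (lborel_d d) (affine_d d v c -` B \<inter> space (lborel_d d))"
    using B affine_d_measurable by (simp add: P_def emeasure_distr)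
  finally show ?thesis .
qed

definition ball_d :: "nat \<Rightarrow> (nat \<Rightarrow> real) \<Rightarrow> real \<Rightarrow> (nat \<Rightarrow> real) set" where
  "ball_d d v \<rho> = {x \<in> space (lborel_d d). norm_d d (\<lambda>i. x i - v i) < \<rho>}"

lemma ball_d_sets[measurable]: "ball_d d v \<rho> \<in> sets (lborel_d d)"
proof -
  have "(\<lambda>x. norm_d d (\<lambda>i. x i - v i)) \<in> borel_measurable (lborel_d d)"
    unfolding norm_d_def lborel_d_def by measurable
  then show ?thesis unfolding ball_d_def by measurable
qed

lemma emeasure_ball_d:
  assumes \<rho>: "\<rho> > 0"
  shows "emeasure (lborel_d d) (ball_d d v \<rho>) = ennreal (\<rho>^d) * emeasure (lborel_d d) (ball_d d (\<lambda>_. 0) 1)"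
proof -
  have norm_affine: "norm_d d (\<lambda>i. affine_d d v \<rho> x i - v i) = \<rho> * norm_d d x" for x
  proof -
    have "norm_d d (\<lambda>i. affine_d d v \<rho> x i - v i) = norm_d d (\<lambda>i. \<rho> * x i)"
      by (rule norm_d_cong) (simp add: affine_d_def)
    then show ?thesis using \<rho> by (simp add: norm_d_scale)
  qed
  have "affine_d d v \<rho> x \<in> space (lborel_d d)" for x
    by (simp add: affine_d_def space_lborel_d space_Rd)
  then have "affine_d d v \<rho> -` ball_d d v \<rho> \<inter> space (lborel_d d) = ball_d d (\<lambda>_. 0) 1"
    using \<rho> norm_affine by (auto simp: ball_d_def)
  then show ?thesis using emeasure_lborel_d_affine_vimage[OF \<rho> ball_d_sets, of d v \<rho> v] by simp
qed

lemma emeasure_unit_ball_d_finite: "emeasure (lborel_d d) (ball_d d (\<lambda>_. 0) 1) < \<infinity>"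
proof -
  have "ball_d d (\<lambda>_. 0) 1 \<subseteq> PiE {..<d} (\<lambda>_. {-1..1})"
  proof
    fix x assume x: "x \<in> ball_d d (\<lambda>_. 0) 1"
    have "\<bar>x i\<bar> \<le> 1" if i: "i < d" for i
    proof -
      have "(x i)\<^sup>2 \<le> (\<Sum>j<d. (x j)\<^sup>2)"
        using i by (intro member_le_sum) auto
      moreover have "sqrt (\<Sum>j<d. (x j)\<^sup>2) < 1" using x by (simp add: ball_d_def norm_d_def)
      ultimately have "(x i)\<^sup>2 < 1"
        by (metis order_le_less_trans real_sqrt_lt_1_iff)
      then show ?thesis by (simp add: abs_square_less_1 less_imp_le)
    qed
    then show "x \<in> PiE {..<d} (\<lambda>_. {-1..1})"
      using x by (auto simp: ball_d_def space_lborel_d space_Rd PiE_def Pi_def abs_le_iff)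
  qed
  then have "emeasure (lborel_d d) (ball_d d (\<lambda>_. 0) 1) \<le> emeasure (lborel_d d) (PiE {..<d} (\<lambda>_. {-1..1}))"
    by (intro emeasure_mono) (auto simp: lborel_d_def intro!: sets_PiM_I_finite)
  also have "\<dots> = (\<Prod>i<d. emeasure lborel {-1..(1::real)})"
    unfolding lborel_d_def by (intro product_sigma_finite.emeasure_PiM) (auto simp: product_sigma_finite_def sigma_finite_lborel)
  also have "\<dots> < \<infinity>" by (simp add: power_less_top_ennreal)
  finally show ?thesis .
qed

lemma emeasure_unit_ball_d_pos:
  assumes d: "d \<ge> 1"
  shows "emeasure (lborel_d d) (ball_d d (\<lambda>_. 0) 1) > 0"
proof -
  have "PiE {..<d} (\<lambda>_. {0..1/(2*real d)}) \<subseteq> ball_d d (\<lambda>_. 0) 1"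
  proof
    fix x assume x: "x \<in> PiE {..<d} (\<lambda>_. {0..1/(2*real d)})"
    have "(\<Sum>j<d. (x j)\<^sup>2) \<le> (\<Sum>j<d. (1/(2*real d))\<^sup>2)"
      using x by (intro sum_mono power_mono) (auto simp: PiE_def Pi_def)
    also have "\<dots> = 1/(4 * real d)" using d by (simp add: power2_eq_square)
    also have "\<dots> < 1" using d by (simp add: field_simps)
    finally have "sqrt (\<Sum>j<d. (x j)\<^sup>2) < 1" by simp
    then show "x \<in> ball_d d (\<lambda>_. 0) 1"
      using x by (auto simp: ball_d_def space_lborel_d space_Rd norm_d_def PiE_def Pi_def)
  qed
  then have "emeasure (lborel_d d) (PiE {..<d} (\<lambda>_. {0..1/(2*real d)})) \<le> emeasure (lborel_d d) (ball_d d (\<lambda>_. 0) 1)"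
    by (intro emeasure_mono) auto
  moreover have "emeasure (lborel_d d) (PiE {..<d} (\<lambda>_. {0..1/(2*real d)})) = (\<Prod>i<d. emeasure lborel {0..1/(2*real d)})"
    unfolding lborel_d_def by (intro product_sigma_finite.emeasure_PiM) (auto simp: product_sigma_finite_def sigma_finite_lborel)
  moreover have "(\<Prod>i<d. emeasure lborel {0..1/(2*real d)}) > 0"
  proof -
    have "0 < 1/(2*real d)" using d by simp
    then have "0 < ennreal ((1/(2*real d)) ^ d)" by simp
    then show ?thesis by (simp add: ennreal_power)
  qed
  ultimately show ?thesis by order
qed

lemma ball_d_disjoint_family:
  assumes "\<forall>v\<in>V. \<forall>w\<in>V. v \<noteq> w \<longrightarrow> \<eta> < norm_d d (\<lambda>i. v i - w i)"
  shows "disjoint_family_on (\<lambda>v. ball_d d v (\<eta>/2)) V"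
  unfolding disjoint_family_on_def
proof (intro ballI impI equals0I)
  fix v w x assume vw: "v \<in> V" "w \<in> V" "v \<noteq> w" and "x \<in> ball_d d v (\<eta>/2) \<inter> ball_d d w (\<eta>/2)"
  then have x: "norm_d d (\<lambda>i. x i - v i) < \<eta>/2" "norm_d d (\<lambda>i. x i - w i) < \<eta>/2"
    by (auto simp: ball_d_def)
  have "norm_d d (\<lambda>i. v i - w i) \<le> norm_d d (\<lambda>i. v i - x i) + norm_d d (\<lambda>i. x i - w i)"
    by (rule norm_d_diff_triangle)
  also have "\<dots> < \<eta>" using x norm_d_diff_commute[of d v x] by simp
  finally show False using assms vw by fastforce
qed

lemma ball_d_subset_ball_d_origin:
  assumes "norm_d d v \<le> r"
  shows "ball_d d v \<rho> \<subseteq> ball_d d (\<lambda>_. 0) (r + \<rho>)"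
proof
  fix x assume x: "x \<in> ball_d d v \<rho>"
  have "norm_d d (\<lambda>i. x i - 0) \<le> norm_d d (\<lambda>i. x i - v i) + norm_d d (\<lambda>i. v i - 0)"
    by (rule norm_d_diff_triangle)
  also have "\<dots> < \<rho> + r" using x assms by (simp add: ball_d_def add_less_le_mono)
  finally show "x \<in> ball_d d (\<lambda>_. 0) (r + \<rho>)" using x by (simp add: ball_d_def add.commute)
qed

text \<open>Volume comparison: the disjoint balls of radius \<open>\<eta>/2\<close> around the points lie in the ball
  of radius \<open>r + \<eta>/2\<close>.\<close>

lemma card_separated_le:
  assumes d: "d \<ge> 1" and eta: "\<eta> > 0" and r: "r \<ge> 0" and fin: "finite V"
    and Vr: "\<forall>v\<in>V. norm_d d v \<le> r"
    and sep: "\<forall>v\<in>V. \<forall>w\<in>V. v \<noteq> w \<longrightarrow> \<eta> < norm_d d (\<lambda>i. v i - w i)"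
  shows "real (card V) \<le> (2*r/\<eta> + 1)^d"
proof -
  obtain M1 where M1: "emeasure (lborel_d d) (ball_d d (\<lambda>_. 0) 1) = ennreal M1" "M1 > 0"
    using emeasure_unit_ball_d_finite[of d] emeasure_unit_ball_d_pos[OF d]
    by (metis less_top_ennreal ennreal_less_zero_iff less_le_not_le top.not_eq_extremum)
  have ball_measure: "emeasure (lborel_d d) (ball_d d v \<rho>) = ennreal (\<rho>^d * M1)" if "\<rho> > 0" for v \<rho>
    using that M1 by (subst emeasure_ball_d[OF that]) (simp add: ennreal_mult)
  have "ennreal (real (card V) * ((\<eta>/2)^d * M1)) = (\<Sum>v\<in>V. emeasure (lborel_d d) (ball_d d v (\<eta>/2)))"
    using eta M1 by (simp add: ball_measure ennreal_mult ennreal_of_nat_eq_real_of_nat)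
  also have "\<dots> = emeasure (lborel_d d) (\<Union>v\<in>V. ball_d d v (\<eta>/2))"
    using ball_d_disjoint_family[OF sep] fin by (intro sum_emeasure) auto
  also have "\<dots> \<le> emeasure (lborel_d d) (ball_d d (\<lambda>_. 0) (r + \<eta>/2))"
    using Vr ball_d_subset_ball_d_origin by (intro emeasure_mono) fastforce+
  also have "\<dots> = ennreal ((r + \<eta>/2)^d * M1)"
    using eta r by (intro ball_measure) linarith
  finally have "real (card V) * (\<eta>/2)^d * M1 \<le> (r + \<eta>/2)^d * M1"
    using M1 eta r by (simp add: ennreal_le_iff mult.assoc)
  then have "real (card V) \<le> (r + \<eta>/2)^d / (\<eta>/2)^d"
    using M1 eta by (simp add: pos_le_divide_eq)
  also have "\<dots> = ((r + \<eta>/2) / (\<eta>/2))^d" by (rule power_divide[symmetric])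
  also have "(r + \<eta>/2) / (\<eta>/2) = 2*r/\<eta> + 1" using eta by (simp add: field_simps)
  finally show ?thesis .
qed

definition separated_on_sphere :: "nat \<Rightarrow> real \<Rightarrow> real \<Rightarrow> (nat \<Rightarrow> real) set \<Rightarrow> bool" where
  "separated_on_sphere d r \<eta> V \<longleftrightarrow> finite V \<and> V \<subseteq> {v \<in> space (Rd d). norm_d d v = r} \<and>
     (\<forall>v\<in>V. \<forall>w\<in>V. v \<noteq> w \<longrightarrow> \<eta> < norm_d d (\<lambda>i. v i - w i))"

text \<open>A maximal \<open>\<eta>\<close>-separated subset of the sphere is an \<open>\<eta>\<close>-net; maximal cardinality exists
  because of the packing bound.\<close>

lemma sphere_net_exists:
  assumes d: "d \<ge> 1" and eta: "\<eta> > 0" and r: "r \<ge> 0"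
  obtains V where "finite V" "V \<subseteq> {v \<in> space (Rd d). norm_d d v = r}"
    "\<And>u. u \<in> space (Rd d) \<Longrightarrow> norm_d d u = r \<Longrightarrow> \<exists>v\<in>V. norm_d d (\<lambda>i. u i - v i) \<le> \<eta>"
    "real (card V) \<le> (2*r/\<eta> + 1)^d"
proof -
  define B where "B = (2*r/\<eta> + 1)^d"
  have card_bound: "real (card V) \<le> B" if "separated_on_sphere d r \<eta> V" for V
    using that unfolding separated_on_sphere_def B_def by (intro card_separated_le[OF d eta r]) auto
  then have "\<forall>V. separated_on_sphere d r \<eta> V \<longrightarrow> card V < nat \<lfloor>B\<rfloor> + 1"
    by (simp add: le_nat_floor less_Suc_eq_le)
  moreover have "separated_on_sphere d r \<eta> {}" by (simp add: separated_on_sphere_def)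
  ultimately obtain V where V: "separated_on_sphere d r \<eta> V"
    and maximal: "\<forall>W. separated_on_sphere d r \<eta> W \<longrightarrow> card W \<le> card V"
    using ex_has_greatest_nat[of "separated_on_sphere d r \<eta>" "{}" card "nat \<lfloor>B\<rfloor> + 1"] by metis
  have cover: "\<exists>v\<in>V. norm_d d (\<lambda>i. u i - v i) \<le> \<eta>" if u: "u \<in> space (Rd d)" "norm_d d u = r" for u
  proof (rule ccontr)
    assume "\<not> ?thesis"
    then have far: "\<forall>v\<in>V. \<eta> < norm_d d (\<lambda>i. u i - v i)" by auto
    then have far': "\<forall>v\<in>V. \<eta> < norm_d d (\<lambda>i. v i - u i)"
      by (simp add: norm_d_diff_commute[of d u])
    have uV: "u \<notin> V"
    proof
      assume "u \<in> V"
      with far have "\<eta> < norm_d d (\<lambda>i. u i - u i)" by blast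
      then show False using eta by (simp add: norm_d_def)
    qed
    have "separated_on_sphere d r \<eta> (insert u V)"
      using V u far far' unfolding separated_on_sphere_def by auto
    then have "card (insert u V) \<le> card V" using maximal by blast
    moreover have "card (insert u V) = Suc (card V)" using V uV by (simp add: separated_on_sphere_def)
    ultimately show False by simp
  qed
  show ?thesis
    by (rule that) (use V cover card_bound[OF V] in \<open>auto simp: separated_on_sphere_def B_def\<close>)
qed

section \<open>One noisy measurement\<close>

lemma borel_measurable_norm_d[measurable]: "norm_d d \<in> borel_measurable (Rd d)"
  unfolding norm_d_def[abs_def] Rd_def by measurable

lemma borel_measurable_inner_d[measurable]: "inner_d d v \<in> borel_measurable (Rd d)"
  unfolding inner_d_def[abs_def] Rd_def by measurable

lemma sphere_d_sets[measurable]: "sphere_d d \<in> sets (Rd d)"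
  unfolding sphere_d_def by measurable

text \<open>Measurements off the sphere or outside the noise support (a null set) are deliberately
  included: then the event \<open>W_N > r\<close> lies in a union of cylinders of these sets for every
  sample, not just for almost every one.\<close>

definition near_consistent :: "nat \<Rightarrow> real \<Rightarrow> (nat \<Rightarrow> real) \<Rightarrow> real \<Rightarrow> ((nat \<Rightarrow> real) \<times> real) set" where
  "near_consistent d \<delta> v \<eta> = {p \<in> space (Rd d) \<times> UNIV.
     fst p \<notin> sphere_d d \<or> \<delta> < \<bar>snd p\<bar> \<or> \<bar>inner_d d v (fst p) - snd p\<bar> \<le> \<delta> + \<eta>}"

lemma space_unif_noise[simp]: "space (unif_noise \<delta>) = UNIV"
  by (simp add: unif_noise_def)

lemma sets_unif_noise[simp, measurable_cong]: "sets (unif_noise \<delta>) = sets borel"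
  by (simp add: unif_noise_def)

lemma near_consistent_sets:
  assumes "sets \<mu> = sets (Rd d)"
  shows "near_consistent d \<delta> v \<eta> \<in> sets (\<mu> \<Otimes>\<^sub>M unif_noise \<delta>')"
proof -
  have "near_consistent d \<delta> v \<eta> = {p \<in> space (Rd d \<Otimes>\<^sub>M (borel :: real measure)).
      fst p \<notin> sphere_d d \<or> \<delta> < \<bar>snd p\<bar> \<or> \<bar>inner_d d v (fst p) - snd p\<bar> \<le> \<delta> + \<eta>}"
    by (simp add: near_consistent_def space_pair_measure)
  also have "\<dots> \<in> sets (Rd d \<Otimes>\<^sub>M (borel :: real measure))" by measurable
  also have "sets (Rd d \<Otimes>\<^sub>M (borel :: real measure)) = sets (\<mu> \<Otimes>\<^sub>M unif_noise \<delta>')"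
    using assms by (intro sets_pair_measure_cong) auto
  finally show ?thesis .
qed

lemma prob_space_unif_noise: "\<delta> > 0 \<Longrightarrow> prob_space (unif_noise \<delta>)"
  unfolding unif_noise_def by (intro prob_space_uniform_measure) auto

lemma emeasure_near_consistent_section:
  assumes dl: "\<delta> > 0" and eta: "\<eta> \<ge> 0" and phi: "\<phi> \<in> sphere_d d"
  shows "emeasure (unif_noise \<delta>) (Pair \<phi> -` near_consistent d \<delta> v \<eta>) \<le> ennreal (max 0 (2*\<delta> + \<eta> - \<bar>inner_d d v \<phi>\<bar>) / (2*\<delta>))"
proof -
  define a where "a = inner_d d v \<phi>"
  define X where "X = {\<epsilon>::real. \<delta> < \<bar>\<epsilon>\<bar> \<or> \<bar>a - \<epsilon>\<bar> \<le> \<delta> + \<eta>}"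
  have phisp: "\<phi> \<in> space (Rd d)" using phi by (simp add: sphere_d_def)
  have sec: "Pair \<phi> -` near_consistent d \<delta> v \<eta> = X"
    using phi phisp by (auto simp: near_consistent_def X_def a_def)
  have Xb: "X \<in> sets borel" unfolding X_def by measurable
  define lo where "lo = max (-\<delta>) (a - \<delta> - \<eta>)"
  define hi where "hi = min \<delta> (a + \<delta> + \<eta>)"
  have sub: "{-\<delta>..\<delta>} \<inter> X \<subseteq> {lo..hi}"
    by (auto simp: X_def lo_def hi_def abs_le_iff)
  have len: "(if lo \<le> hi then hi - lo else 0) \<le> max 0 (2*\<delta> + \<eta> - \<bar>a\<bar>)"
    unfolding lo_def hi_def by (auto simp: abs_if max_def min_def)
  have "emeasure (unif_noise \<delta>) X = emeasure lborel ({-\<delta>..\<delta>} \<inter> X) / emeasure lborel {-\<delta>..\<delta>}"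
    unfolding unif_noise_def using Xb by (subst emeasure_uniform_measure) auto
  also have "\<dots> \<le> emeasure lborel {lo..hi} / emeasure lborel {-\<delta>..\<delta>}"
    using sub Xb by (intro divide_right_mono_ennreal emeasure_mono) auto
  also have "emeasure lborel {lo..hi} \<le> ennreal (max 0 (2*\<delta> + \<eta> - \<bar>a\<bar>))"
  proof -
    have "emeasure lborel {lo..hi} = ennreal (if lo \<le> hi then hi - lo else 0)"
      by (rule emeasure_lborel_Icc_eq)
    then show ?thesis using len ennreal_leI by metis
  qed
  then have "emeasure lborel {lo..hi} / emeasure lborel {-\<delta>..\<delta>} \<le> ennreal (max 0 (2*\<delta> + \<eta> - \<bar>a\<bar>)) / ennreal (2*\<delta>)"
  proof -
    have "emeasure lborel {-\<delta>..\<delta>} = ennreal (2*\<delta>)" using dl by simp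
    then show ?thesis using \<open>emeasure lborel {lo..hi} \<le> _\<close> by (simp add: divide_right_mono_ennreal)
  qed
  also have "\<dots> = ennreal (max 0 (2*\<delta> + \<eta> - \<bar>a\<bar>) / (2*\<delta>))"
    using dl by (intro divide_ennreal) auto
  finally show ?thesis unfolding sec a_def .
qed

lemma abs_scaled_minus_le:
  fixes a \<epsilon> t \<delta> :: real
  assumes "\<bar>a - \<epsilon>\<bar> \<le> \<delta>" "\<bar>\<epsilon>\<bar> \<le> \<delta>" "0 \<le> t" "t \<le> 1"
  shows "\<bar>t * a - \<epsilon>\<bar> \<le> \<delta>"
proof -
  have "\<bar>t * a - \<epsilon>\<bar> = \<bar>t * (a - \<epsilon>) - (1 - t) * \<epsilon>\<bar>" by (simp add: algebra_simps)
  also have "\<dots> \<le> t * \<bar>a - \<epsilon>\<bar> + (1 - t) * \<bar>\<epsilon>\<bar>"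
    using assms by (auto intro: order_trans[OF abs_triangle_ineq4] simp: abs_mult)
  also have "\<dots> \<le> t * \<delta> + (1 - t) * \<delta>"
    using assms by (intro add_mono mult_left_mono) auto
  finally show ?thesis by (simp add: algebra_simps)
qed

section \<open>The measurement model\<close>

locale measurement_model =
  fixes d :: nat and \<delta> :: real and \<mu> :: "(nat \<Rightarrow> real) measure"
  assumes d_ge_1: "d \<ge> 1" and \<delta>_pos: "\<delta> > 0" and prob_space_mu: "prob_space \<mu>" and sets_mu: "sets \<mu> = sets (Rd d)"
    and AE_sphere: "AE v in \<mu>. v \<in> sphere_d d"
begin

abbreviation "\<nu> \<equiv> unif_noise \<delta>"
abbreviation "pair_law \<equiv> \<mu> \<Otimes>\<^sub>M \<nu>"
abbreviation "\<Omega> N \<equiv> sample_law N \<mu> \<delta>"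

lemma space_mu: "space \<mu> = space (Rd d)"
  using sets_eq_imp_space_eq[OF sets_mu] .

lemma borel_measurable_inner_d_mu: "inner_d d v \<in> borel_measurable \<mu>"
  using measurable_cong_sets[OF sets_mu refl] borel_measurable_inner_d by blast

lemma small_ball_sets: "{\<phi> \<in> space \<mu>. \<bar>inner_d d v \<phi>\<bar> \<le> t} \<in> sets \<mu>"
  using borel_measurable_inner_d_mu[of v] by measurable

lemma emeasure_mu_eq_measure: "emeasure \<mu> A = ennreal (measure \<mu> A)"
proof -
  interpret prob_space \<mu> by (rule prob_space_mu)
  show ?thesis by (rule emeasure_eq_measure)
qed

lemma prob_space_noise: "prob_space \<nu>" using prob_space_unif_noise[OF \<delta>_pos] .

lemma emeasure_noise_le_1: "emeasure \<nu> A \<le> 1"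
  using prob_space.emeasure_le_1[OF prob_space_noise] .

lemma emeasure_near_consistent_Fubini:
  "emeasure pair_law (near_consistent d \<delta> v \<eta>) = (\<integral>\<^sup>+\<phi>. emeasure \<nu> (Pair \<phi> -` near_consistent d \<delta> v \<eta>) \<partial>\<mu>)"
proof -
  interpret sigma_finite_measure \<nu> using prob_space_noise by (simp add: prob_space_imp_sigma_finite)
  show ?thesis by (rule emeasure_pair_measure_alt) (rule near_consistent_sets[OF sets_mu])
qed

lemma sphere_d_in_space_mu: "\<phi> \<in> sphere_d d \<Longrightarrow> \<phi> \<in> space \<mu>"
  by (simp add: space_mu sphere_d_def)

text \<open>For \<open>|\<langle>v, \<phi>\<rangle>| > 2\<eta>\<close> the window of admissible noise values has length at most
  \<open>2\<delta> - \<eta>\<close>, and by hypothesis this happens with probability at least \<open>1/2\<close>.\<close>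

lemma emeasure_near_consistent_le_one_minus:
  assumes eta: "\<eta> > 0" "\<eta> \<le> 2*\<delta>"
    and sm: "measure \<mu> {\<phi> \<in> space \<mu>. \<bar>inner_d d v \<phi>\<bar> \<le> 2*\<eta>} \<le> 1/2"
  shows "emeasure pair_law (near_consistent d \<delta> v \<eta>) \<le> ennreal (1 - \<eta>/(4*\<delta>))"
proof -
  define c where "c = \<eta>/(2*\<delta>)"
  have c: "0 < c" "c \<le> 1" using eta \<delta>_pos by (auto simp: c_def)
  define Small where "Small = {\<phi> \<in> space \<mu>. \<bar>inner_d d v \<phi>\<bar> \<le> 2*\<eta>}"
  have Small: "Small \<in> sets \<mu>" unfolding Small_def by (rule small_ball_sets)
  have section_le: "AE \<phi> in \<mu>. emeasure \<nu> (Pair \<phi> -` near_consistent d \<delta> v \<eta>) \<le> ennreal (1 - c) + ennreal c * indicator Small \<phi>"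
    using AE_sphere
  proof (rule AE_mp, intro AE_I2 impI)
    fix \<phi> assume phi: "\<phi> \<in> sphere_d d"
    show "emeasure \<nu> (Pair \<phi> -` near_consistent d \<delta> v \<eta>) \<le> ennreal (1 - c) + ennreal c * indicator Small \<phi>"
    proof (cases "\<phi> \<in> Small")
      case True
      then have "ennreal (1 - c) + ennreal c * indicator Small \<phi> = 1"
        using c by (simp add: ennreal_plus[symmetric] del: ennreal_plus)
      then show ?thesis using emeasure_noise_le_1 by simp
    next
      case False
      then have big: "2*\<eta> < \<bar>inner_d d v \<phi>\<bar>" using sphere_d_in_space_mu[OF phi] by (auto simp: Small_def)
      have "max 0 (2*\<delta> + \<eta> - \<bar>inner_d d v \<phi>\<bar>) / (2*\<delta>) \<le> 1 - c"
        using big eta \<delta>_pos by (auto simp: c_def field_simps max_def)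
      then have "emeasure \<nu> (Pair \<phi> -` near_consistent d \<delta> v \<eta>) \<le> ennreal (1 - c)"
        using emeasure_near_consistent_section[OF \<delta>_pos _ phi, of \<eta> v] eta
        by (meson ennreal_leI less_imp_le order_trans)
      then show ?thesis using False by simp
    qed
  qed
  have "emeasure pair_law (near_consistent d \<delta> v \<eta>) \<le> (\<integral>\<^sup>+\<phi>. ennreal (1 - c) + ennreal c * indicator Small \<phi> \<partial>\<mu>)"
    unfolding emeasure_near_consistent_Fubini using section_le by (rule nn_integral_mono_AE)
  also have "\<dots> = ennreal (1 - c) * emeasure \<mu> (space \<mu>) + ennreal c * emeasure \<mu> Small"
    using Small by (subst nn_integral_add) (auto simp: nn_integral_cmult_indicator)
  also have "\<dots> = ennreal (1 - c) + ennreal c * ennreal (measure \<mu> Small)"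
    using prob_space_mu by (simp add: prob_space.emeasure_space_1 emeasure_mu_eq_measure[of Small])
  also have "\<dots> \<le> ennreal (1 - c) + ennreal c * ennreal (1/2)"
    using sm unfolding Small_def by (intro add_mono mult_mono ennreal_leI) auto
  also have "\<dots> = ennreal (1 - c + c * (1/2))"
    using c by (subst ennreal_mult[symmetric], simp, simp, subst ennreal_plus[symmetric]) auto
  also have "1 - c + c * (1/2) = 1 - \<eta>/(4*\<delta>)" using \<delta>_pos by (simp add: c_def field_simps)
  finally show ?thesis .
qed

lemma emeasure_near_consistent_le_small_ball:
  assumes eta: "\<eta> \<ge> 0"
  shows "emeasure pair_law (near_consistent d \<delta> v \<eta>) \<le> ennreal (measure \<mu> {\<phi> \<in> space \<mu>. \<bar>inner_d d v \<phi>\<bar> \<le> 2*\<delta> + \<eta>})"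
proof -
  define Small where "Small = {\<phi> \<in> space \<mu>. \<bar>inner_d d v \<phi>\<bar> \<le> 2*\<delta> + \<eta>}"
  have Small: "Small \<in> sets \<mu>" unfolding Small_def by (rule small_ball_sets)
  have section_le: "AE \<phi> in \<mu>. emeasure \<nu> (Pair \<phi> -` near_consistent d \<delta> v \<eta>) \<le> indicator Small \<phi>"
    using AE_sphere
  proof (rule AE_mp, intro AE_I2 impI)
    fix \<phi> assume phi: "\<phi> \<in> sphere_d d"
    show "emeasure \<nu> (Pair \<phi> -` near_consistent d \<delta> v \<eta>) \<le> indicator Small \<phi>"
    proof (cases "\<phi> \<in> Small")
      case True
      then show ?thesis using emeasure_noise_le_1 by simp
    next
      case False
      then have big: "2*\<delta> + \<eta> < \<bar>inner_d d v \<phi>\<bar>" using sphere_d_in_space_mu[OF phi] by (auto simp: Small_def)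
      have zero: "max 0 (2*\<delta> + \<eta> - \<bar>inner_d d v \<phi>\<bar>) / (2*\<delta>) = 0"
        using big by (simp add: max_def)
      have "emeasure \<nu> (Pair \<phi> -` near_consistent d \<delta> v \<eta>) \<le> ennreal 0"
        using emeasure_near_consistent_section[OF \<delta>_pos eta phi, of v] unfolding zero .
      then show ?thesis using False by simp
    qed
  qed
  have "emeasure pair_law (near_consistent d \<delta> v \<eta>) \<le> (\<integral>\<^sup>+\<phi>. indicator Small \<phi> \<partial>\<mu>)"
    unfolding emeasure_near_consistent_Fubini using section_le by (rule nn_integral_mono_AE)
  also have "\<dots> = emeasure \<mu> Small" using Small by simp
  also have "\<dots> = ennreal (measure \<mu> Small)" using prob_space_mu by (simp add: emeasure_mu_eq_measure)
  finally show ?thesis unfolding Small_def .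
qed

lemma prob_space_pair_law: "prob_space pair_law"
  using prob_space_pair[OF prob_space_mu prob_space_noise] .

lemma space_pair_law: "space pair_law = space (Rd d) \<times> UNIV"
  by (simp add: space_pair_measure space_mu)

lemma space_sample_law: "space (\<Omega> N) = PiE {..<N} (\<lambda>_. space (Rd d) \<times> UNIV)"
  by (simp add: sample_law_def space_PiM space_pair_law)

lemma near_consistent_cylinder_sets: "PiE {..<N} (\<lambda>_. near_consistent d \<delta> v \<eta>) \<in> sets (\<Omega> N)"
  unfolding sample_law_def by (intro sets_PiM_I_finite near_consistent_sets[OF sets_mu]) auto

lemma emeasure_near_consistent_cylinder:
  "emeasure (\<Omega> N) (PiE {..<N} (\<lambda>_. near_consistent d \<delta> v \<eta>)) = emeasure pair_law (near_consistent d \<delta> v \<eta>) ^ N"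
proof -
  interpret product_sigma_finite "\<lambda>_::nat. pair_law"
    unfolding product_sigma_finite_def using prob_space_pair_law by (simp add: prob_space_imp_sigma_finite)
  have "emeasure (\<Omega> N) (PiE {..<N} (\<lambda>_. near_consistent d \<delta> v \<eta>)) = (\<Prod>i<N. emeasure pair_law (near_consistent d \<delta> v \<eta>))"
    unfolding sample_law_def by (intro emeasure_PiM near_consistent_sets[OF sets_mu]) auto
  then show ?thesis by simp
qed

text \<open>A consistent point of norm greater than \<open>r\<close> can be scaled down to norm \<open>r\<close> and stays
  consistent; a net point within \<open>\<eta>\<close> of it is then \<open>(\<delta> + \<eta>)\<close>-consistent.\<close>

lemma W_N_gt_imp_near_consistent:
  assumes \<omega>: "\<omega> \<in> space (\<Omega> N)" and r: "r > 0"
    and net: "\<And>u. u \<in> space (Rd d) \<Longrightarrow> norm_d d u = r \<Longrightarrow> \<exists>v\<in>V. norm_d d (\<lambda>i. u i - v i) \<le> \<eta>"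
    and W: "ennreal r < W_N d N \<delta> \<omega>"
  shows "\<exists>v\<in>V. \<omega> \<in> PiE {..<N} (\<lambda>_. near_consistent d \<delta> v \<eta>)"
proof -
  obtain u where u: "u \<in> P_N d N \<delta> \<omega>" and ru: "r < norm_d d u"
    using W r unfolding W_N_def by (auto simp: less_SUP_iff ennreal_less_iff)
  define t where "t = r / norm_d d u"
  have t: "0 < t" "t < 1" using r ru by (auto simp: t_def)
  have "norm_d d (scale_d d t u) = r" using t r ru by (simp add: norm_d_scale_d t_def)
  then obtain v where v: "v \<in> V" and uv: "norm_d d (\<lambda>i. scale_d d t u i - v i) \<le> \<eta>"
    using net scale_d_in_space by blast
  have "\<omega> n \<in> near_consistent d \<delta> v \<eta>" if n: "n < N" for n
  proof -
    obtain \<phi> \<epsilon> where \<omega>n: "\<omega> n = (\<phi>, \<epsilon>)" by fastforce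
    have \<phi>: "\<phi> \<in> space (Rd d)" using \<omega> n \<omega>n by (auto simp: space_sample_law PiE_def Pi_def)
    show ?thesis
    proof (cases "\<phi> \<in> sphere_d d \<and> \<bar>\<epsilon>\<bar> \<le> \<delta>")
      case False
      then show ?thesis using \<phi> \<omega>n by (auto simp: near_consistent_def)
    next
      case True
      then have unit: "norm_d d \<phi> = 1" and \<epsilon>: "\<bar>\<epsilon>\<bar> \<le> \<delta>" by (auto simp: sphere_d_def)
      have "\<bar>inner_d d u \<phi> - \<epsilon>\<bar> \<le> \<delta>" using u n \<omega>n by (force simp: P_N_def)
      then have "\<bar>inner_d d (scale_d d t u) \<phi> - \<epsilon>\<bar> \<le> \<delta>"
        using \<epsilon> t by (simp add: inner_d_scale_d abs_scaled_minus_le)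
      moreover have "\<bar>inner_d d v \<phi> - inner_d d (scale_d d t u) \<phi>\<bar> \<le> \<eta>"
        using abs_inner_d_diff_le_unit[OF unit, of v "scale_d d t u"] uv by linarith
      ultimately have "\<bar>inner_d d v \<phi> - \<epsilon>\<bar> \<le> \<delta> + \<eta>" by linarith
      then show ?thesis using \<phi> \<omega>n by (auto simp: near_consistent_def)
    qed
  qed
  moreover have "\<omega> \<in> extensional {..<N}" using \<omega> by (simp add: space_sample_law PiE_def)
  ultimately show ?thesis using v by (auto simp: PiE_def Pi_def)
qed

text \<open>\<open>W_N\<close> is not shown to be measurable; its tail is bounded through a measurable superset of
  \<open>{W_N > r}\<close>.\<close>

lemma W_N_tail_via_net:
  assumes r: "r > 0" and eta: "\<eta> > 0" and q: "q \<ge> 0"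
    and near_consistent_le: "\<And>v. v \<in> space (Rd d) \<Longrightarrow> norm_d d v = r \<Longrightarrow>
      emeasure pair_law (near_consistent d \<delta> v \<eta>) \<le> ennreal q"
  obtains E where "E \<in> sets (\<Omega> N)" "\<And>\<omega>. \<omega> \<in> space (\<Omega> N) \<Longrightarrow> ennreal r < W_N d N \<delta> \<omega> \<Longrightarrow> \<omega> \<in> E"
    "emeasure (\<Omega> N) E \<le> ennreal ((2*r/\<eta> + 1)^d * q^N)"
proof -
  obtain V where fin: "finite V" and V: "V \<subseteq> {v \<in> space (Rd d). norm_d d v = r}"
    and net: "\<And>u. u \<in> space (Rd d) \<Longrightarrow> norm_d d u = r \<Longrightarrow> \<exists>v\<in>V. norm_d d (\<lambda>i. u i - v i) \<le> \<eta>"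
    and card: "real (card V) \<le> (2*r/\<eta> + 1)^d"
    using sphere_net_exists[OF d_ge_1 eta, of r] r by auto
  define E where "E = (\<Union>v\<in>V. PiE {..<N} (\<lambda>_. near_consistent d \<delta> v \<eta>))"
  have "emeasure (\<Omega> N) E \<le> (\<Sum>v\<in>V. emeasure (\<Omega> N) (PiE {..<N} (\<lambda>_. near_consistent d \<delta> v \<eta>)))"
    unfolding E_def using fin near_consistent_cylinder_sets by (intro emeasure_subadditive_finite) auto
  also have "\<dots> = (\<Sum>v\<in>V. emeasure pair_law (near_consistent d \<delta> v \<eta>) ^ N)"
    by (simp add: emeasure_near_consistent_cylinder)
  also have "\<dots> \<le> (\<Sum>v\<in>V. ennreal q ^ N)"
    using V by (intro sum_mono power_mono near_consistent_le) auto
  also have "\<dots> = ennreal (real (card V) * q^N)"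
    using q by (simp add: ennreal_power ennreal_mult ennreal_of_nat_eq_real_of_nat)
  also have "\<dots> \<le> ennreal ((2*r/\<eta> + 1)^d * q^N)"
    using card q by (intro ennreal_leI mult_right_mono) auto
  finally have "emeasure (\<Omega> N) E \<le> ennreal ((2*r/\<eta> + 1)^d * q^N)" .
  moreover have "E \<in> sets (\<Omega> N)" unfolding E_def using fin near_consistent_cylinder_sets by auto
  moreover have "\<omega> \<in> E" if "\<omega> \<in> space (\<Omega> N)" "ennreal r < W_N d N \<delta> \<omega>" for \<omega>
    using W_N_gt_imp_near_consistent[OF that(1) r net that(2)] unfolding E_def by blast
  ultimately show ?thesis using that by blast
qed

end

section \<open>Tail bounds for the worst case error\<close>

locale anti_concentrated_model = measurement_model +
  fixes \<alpha> s :: real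
  assumes \<alpha>_ge_1: "\<alpha> \<ge> 1" and s_pos: "s > 0"
    and anti_concentration: "\<forall>x \<in> sphere_d d. \<forall>t \<in> {0..1}. measure \<mu> {v \<in> space \<mu>. \<bar>inner_d d x v\<bar> \<le> t} \<le> \<alpha> * t powr s"
begin

text \<open>The scale at which anti-concentration leaves half of the mass: \<open>\<alpha> A\<^sup>-\<^sup>s = 1/2\<close>.\<close>

definition "A = (2*\<alpha>) powr (1/s)"

lemma A_pow: "A powr s = 2*\<alpha>"
  using \<alpha>_ge_1 s_pos by (simp add: A_def powr_powr)

lemma A_ge_1: "A \<ge> 1"
  using \<alpha>_ge_1 s_pos unfolding A_def by (intro ge_one_powr_ge_zero) auto

lemma A_pos: "A > 0" using A_ge_1 by simp

lemma small_ball_scaled: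
  assumes v: "norm_d d v = r" and r: "r > 0" and t: "0 \<le> t" "t \<le> r"
  shows "measure \<mu> {\<phi> \<in> space \<mu>. \<bar>inner_d d v \<phi>\<bar> \<le> t} \<le> \<alpha> * (t/r) powr s"
proof -
  define x where "x = scale_d d (1/r) v"
  have x: "x \<in> sphere_d d"
    using v r by (simp add: sphere_d_def x_def scale_d_in_space norm_d_scale_d)
  have "{\<phi> \<in> space \<mu>. \<bar>inner_d d v \<phi>\<bar> \<le> t} = {\<phi> \<in> space \<mu>. \<bar>inner_d d x \<phi>\<bar> \<le> t/r}"
    using r by (auto simp: x_def inner_d_scale_d abs_mult field_simps)
  also have "measure \<mu> \<dots> \<le> \<alpha> * (t/r) powr s"
    using anti_concentration x t r by auto
  finally show ?thesis .
qed

lemma near_consistent_le_small_radius: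
  assumes v: "norm_d d v = r" and r: "0 < r" "r \<le> 4*\<delta>*A"
  shows "emeasure pair_law (near_consistent d \<delta> v (r/(2*A))) \<le> ennreal (1 - r/(8*\<delta>*A))"
proof -
  define \<eta> where "\<eta> = r/(2*A)"
  have \<eta>: "\<eta> > 0" "\<eta> \<le> 2*\<delta>" using r A_pos \<delta>_pos by (auto simp: \<eta>_def field_simps)
  have "measure \<mu> {\<phi> \<in> space \<mu>. \<bar>inner_d d v \<phi>\<bar> \<le> 2*\<eta>} \<le> \<alpha> * (2*\<eta>/r) powr s"
    using r A_ge_1 by (intro small_ball_scaled[OF v]) (auto simp: \<eta>_def field_simps)
  also have "2*\<eta>/r = 1/A" using r A_pos by (simp add: \<eta>_def field_simps)
  also have "\<alpha> * (1/A) powr s = 1/2"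
    using A_pow A_pos \<alpha>_ge_1 by (simp add: powr_divide)
  finally have "emeasure pair_law (near_consistent d \<delta> v \<eta>) \<le> ennreal (1 - \<eta>/(4*\<delta>))"
    by (rule emeasure_near_consistent_le_one_minus[OF \<eta>])
  also have "\<eta>/(4*\<delta>) = r/(8*\<delta>*A)" by (simp add: \<eta>_def field_simps)
  finally show ?thesis by (simp add: \<eta>_def)
qed

lemma near_consistent_le_large_radius:
  assumes v: "norm_d d v = r" and r: "3*\<delta> \<le> r"
  shows "emeasure pair_law (near_consistent d \<delta> v \<delta>) \<le> ennreal (\<alpha> * (3*\<delta>/r) powr s)"
proof -
  have "emeasure pair_law (near_consistent d \<delta> v \<delta>)
      \<le> ennreal (measure \<mu> {\<phi> \<in> space \<mu>. \<bar>inner_d d v \<phi>\<bar> \<le> 2*\<delta> + \<delta>})"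
    using \<delta>_pos by (intro emeasure_near_consistent_le_small_ball) auto
  also have "\<dots> \<le> ennreal (\<alpha> * (3*\<delta>/r) powr s)"
    using small_ball_scaled[OF v, of "3*\<delta>"] \<delta>_pos r by (intro ennreal_leI) auto
  finally show ?thesis .
qed

text \<open>The two branches are the union bound with net scale \<open>r/(2A)\<close> and \<open>\<delta>\<close>, respectively.\<close>

definition "tail_bound N r = (if r \<le> 4*\<delta>*A then (4*A+1)^d * (1 - r/(8*\<delta>*A))^N
                       else (2*r/\<delta>+1)^d * (\<alpha> * (3*\<delta>/r) powr s)^N)"

lemma W_N_tail_bound:
  assumes r: "r > 0"
  obtains E where "E \<in> sets (\<Omega> N)" "\<And>\<omega>. \<omega> \<in> space (\<Omega> N) \<Longrightarrow> ennreal r < W_N d N \<delta> \<omega> \<Longrightarrow> \<omega> \<in> E"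
    "emeasure (\<Omega> N) E \<le> ennreal (tail_bound N r)"
proof (cases "r \<le> 4*\<delta>*A")
  case True
  have \<eta>: "r/(2*A) > 0" and q: "1 - r/(8*\<delta>*A) \<ge> 0" and net_size: "2*r/(r/(2*A)) + 1 = 4*A + 1"
    using r True A_pos \<delta>_pos by (auto simp: field_simps)
  obtain E where "E \<in> sets (\<Omega> N)" "\<And>\<omega>. \<omega> \<in> space (\<Omega> N) \<Longrightarrow> ennreal r < W_N d N \<delta> \<omega> \<Longrightarrow> \<omega> \<in> E"
    "emeasure (\<Omega> N) E \<le> ennreal ((2*r/(r/(2*A)) + 1)^d * (1 - r/(8*\<delta>*A))^N)"
    using W_N_tail_via_net[OF r \<eta> q] near_consistent_le_small_radius r True by metis
  then show ?thesis using that True unfolding net_size tail_bound_def by simp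
next
  case False
  then have "3*\<delta> \<le> r" using \<delta>_pos mult_left_mono[OF A_ge_1, of "4*\<delta>"] by linarith
  moreover have q: "\<alpha> * (3*\<delta>/r) powr s \<ge> 0" using \<alpha>_ge_1 by simp
  ultimately obtain E where "E \<in> sets (\<Omega> N)"
    "\<And>\<omega>. \<omega> \<in> space (\<Omega> N) \<Longrightarrow> ennreal r < W_N d N \<delta> \<omega> \<Longrightarrow> \<omega> \<in> E"
    "emeasure (\<Omega> N) E \<le> ennreal ((2*r/\<delta> + 1)^d * (\<alpha> * (3*\<delta>/r) powr s)^N)"
    using W_N_tail_via_net[OF r \<delta>_pos q] near_consistent_le_large_radius by metis
  then show ?thesis using that False unfolding tail_bound_def by simp
qed

end

section \<open>Second moment by dyadic layers\<close>

lemma dyadic_sq: "(r0 * 2^k)\<^sup>2 = (r0::real)\<^sup>2 * 4^k"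
  by (simp add: power_mult_distrib power2_eq_square flip: power_mult_distrib[of "2::real" 2 k])

lemma dyadic_squares_telescope: "(r0::real)\<^sup>2 + (\<Sum>k<n. 3 * (r0 * 2^k)\<^sup>2) = (r0 * 2^n)\<^sup>2"
  by (induction n) (simp_all add: power_mult_distrib algebra_simps)

lemma sq_dyadic_le_indicator_sum:
  fixes r0 :: real
  assumes "\<forall>k<n. x \<in> E k"
  shows "ennreal ((r0 * 2^n)\<^sup>2) \<le> ennreal (r0\<^sup>2) + (\<Sum>k. ennreal (3 * (r0 * 2^k)\<^sup>2) * indicator (E k) x)"
proof -
  have "ennreal ((r0 * 2^n)\<^sup>2) = ennreal (r0\<^sup>2) + ennreal (\<Sum>k<n. 3 * (r0 * 2^k)\<^sup>2)"
    by (simp only: dyadic_squares_telescope[symmetric, of r0 n]) (rule ennreal_plus, auto intro: sum_nonneg)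
  also have "ennreal (\<Sum>k<n. 3 * (r0 * 2^k)\<^sup>2) = (\<Sum>k<n. ennreal (3 * (r0 * 2^k)\<^sup>2))"
    by (rule sum_ennreal[symmetric]) auto
  also have "(\<Sum>k<n. ennreal (3 * (r0 * 2^k)\<^sup>2)) = (\<Sum>k<n. ennreal (3 * (r0 * 2^k)\<^sup>2) * indicator (E k) x)"
    using assms by (intro sum.cong) auto
  also have "\<dots> \<le> (\<Sum>k. ennreal (3 * (r0 * 2^k)\<^sup>2) * indicator (E k) x)"
    by (intro sum_le_suminf[OF summableI]) auto
  finally show ?thesis by (simp add: add_left_mono)
qed

lemma sq_le_dyadic_indicator_sum:
  fixes W :: ennreal and r0 :: real
  assumes r0: "r0 > 0" and E: "\<And>k. ennreal (r0 * 2^k) < W \<Longrightarrow> x \<in> E k"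
  shows "W\<^sup>2 \<le> ennreal (r0\<^sup>2) + (\<Sum>k. ennreal (3 * (r0 * 2^k)\<^sup>2) * indicator (E k) x)"
    (is "_ \<le> ?R")
proof (cases "\<exists>n. W \<le> ennreal (r0 * 2^n)")
  case True
  define n where "n = (LEAST n. W \<le> ennreal (r0 * 2^n))"
  have Wn: "W \<le> ennreal (r0 * 2^n)" unfolding n_def using True by (rule LeastI_ex)
  have "\<forall>k<n. x \<in> E k"
    using E not_less_Least[of _ "\<lambda>n. W \<le> ennreal (r0 * 2^n)"] unfolding n_def by (simp add: not_le)
  then have "ennreal ((r0 * 2^n)\<^sup>2) \<le> ?R" by (rule sq_dyadic_le_indicator_sum)
  moreover have "W\<^sup>2 \<le> ennreal ((r0 * 2^n)\<^sup>2)"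
    using Wn r0 by (simp add: ennreal_power[symmetric] power_mono)
  ultimately show ?thesis by order
next
  case False
  then have "\<forall>k<n. x \<in> E k" for n using E by (simp add: not_le)
  then have below: "ennreal ((r0 * 2^n)\<^sup>2) \<le> ?R" for n by (rule sq_dyadic_le_indicator_sum)
  have "?R = \<top>"
  proof (rule ccontr)
    assume "?R \<noteq> \<top>"
    then obtain y where y: "?R = ennreal y" "y \<ge> 0" by (cases ?R) auto
    obtain n where "y / r0\<^sup>2 < 4^n" using real_arch_pow[of 4 "y / r0\<^sup>2"] by auto
    then have "y < (r0 * 2^n)\<^sup>2" unfolding dyadic_sq using r0 by (simp add: field_simps)
    then show False using below[of n] y by (simp add: ennreal_le_iff)
  qed
  then show ?thesis by simp
qed

context anti_concentrated_model
begin

lemma prob_space_sample_law: "prob_space (\<Omega> N)"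
  unfolding sample_law_def by (intro prob_space_PiM prob_space_pair_law)

lemma nn_integral_W_N_sq_le_dyadic_sum:
  assumes r0: "r0 > 0"
  shows "(\<integral>\<^sup>+\<omega>. (W_N d N \<delta> \<omega>)\<^sup>2 \<partial>\<Omega> N)
    \<le> ennreal (r0\<^sup>2) + (\<Sum>k. ennreal (3 * (r0 * 2^k)\<^sup>2 * tail_bound N (r0 * 2^k)))"
proof -
  have "\<exists>E. E \<in> sets (\<Omega> N) \<and> (\<forall>\<omega>\<in>space (\<Omega> N). ennreal (r0 * 2^k) < W_N d N \<delta> \<omega> \<longrightarrow> \<omega> \<in> E) \<and>
      emeasure (\<Omega> N) E \<le> ennreal (tail_bound N (r0 * 2^k))" for k
    using W_N_tail_bound[of "r0 * 2^k" N] r0 by (metis zero_less_numeral zero_less_power mult_pos_pos)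
  then obtain E where E: "\<And>k. E k \<in> sets (\<Omega> N)"
    "\<And>k. \<forall>\<omega>\<in>space (\<Omega> N). ennreal (r0 * 2^k) < W_N d N \<delta> \<omega> \<longrightarrow> \<omega> \<in> E k"
    "\<And>k. emeasure (\<Omega> N) (E k) \<le> ennreal (tail_bound N (r0 * 2^k))"
    by metis
  interpret sample: prob_space "\<Omega> N" by (rule prob_space_sample_law)
  have meas: "(\<lambda>x. ennreal (3 * (r0 * 2^k)\<^sup>2) * indicator (E k) x) \<in> borel_measurable (\<Omega> N)" for k
    using E(1)[of k] by measurable
  have "(\<integral>\<^sup>+\<omega>. (W_N d N \<delta> \<omega>)\<^sup>2 \<partial>\<Omega> N) \<le>
        (\<integral>\<^sup>+\<omega>. ennreal (r0\<^sup>2) + (\<Sum>k. ennreal (3 * (r0 * 2^k)\<^sup>2) * indicator (E k) \<omega>) \<partial>\<Omega> N)"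
    using E(2) by (intro nn_integral_mono sq_le_dyadic_indicator_sum[OF r0]) auto
  also have "\<dots> = ennreal (r0\<^sup>2) + (\<Sum>k. ennreal (3 * (r0 * 2^k)\<^sup>2) * emeasure (\<Omega> N) (E k))"
    using meas E(1)
    by (simp add: nn_integral_add borel_measurable_suminf nn_integral_suminf nn_integral_cmult_indicator
        sample.emeasure_space_1)
  also have "\<dots> \<le> ennreal (r0\<^sup>2) + (\<Sum>k. ennreal (3 * (r0 * 2^k)\<^sup>2 * tail_bound N (r0 * 2^k)))"
  proof (intro add_left_mono suminf_le summableI)
    fix k
    have "ennreal (3 * (r0 * 2^k)\<^sup>2) * emeasure (\<Omega> N) (E k)
        \<le> ennreal (3 * (r0 * 2^k)\<^sup>2) * ennreal (tail_bound N (r0 * 2^k))"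
      using E(3) by (intro mult_left_mono) auto
    then show "ennreal (3 * (r0 * 2^k)\<^sup>2) * emeasure (\<Omega> N) (E k)
        \<le> ennreal (3 * (r0 * 2^k)\<^sup>2 * tail_bound N (r0 * 2^k))"
      by (simp add: ennreal_mult')
  qed
  finally show ?thesis .
qed

end

lemma real_Suc_le_two_power: "real k + 1 \<le> 2^k"
proof -
  have "k < 2^k" by (rule less_exp)
  then have "k + 1 \<le> (2::nat)^k" by (simp add: Suc_leI)
  then have "real (k + 1) \<le> real ((2::nat)^k)" by (rule of_nat_mono)
  then show ?thesis by simp
qed

lemma exp_one_ge_two: "exp (1::real) \<ge> 2"
  using exp_ge_add_one_self[of 1] by simp

lemma ln_16_ge_two: "ln (16::real) \<ge> 2"
proof -
  have "exp (2::real) = exp 1 ^ 2" by (simp add: exp_of_nat_mult[symmetric])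
  also have "\<dots> \<le> 3^2" using exp_le by (intro power_mono) auto
  finally have "exp (2::real) \<le> 16" by simp
  then show ?thesis by (subst ln_ge_iff) auto
qed

lemma sq_div_16_le_exp_half: "(x::real) \<ge> 0 \<Longrightarrow> x\<^sup>2 / 16 \<le> exp (x/2)"
proof -
  assume x: "x \<ge> 0"
  have "exp (real 2 * (x/4)) = exp (x/4)^2" by (rule exp_of_nat_mult)
  then have "exp (x/2) = exp (x/4)^2" by simp
  moreover have "x/4 \<le> exp (x/4)" using exp_ge_add_one_self[of "x/4"] by linarith
  then have "(x/4)^2 \<le> exp (x/4)^2" using x by (intro power_mono) auto
  ultimately show ?thesis by (simp add: power_divide)
qed

lemma exp_minus_three_le: "exp (-3::real) \<le> 1/8"
proof -
  have "(2::real)^3 \<le> exp 1 ^ 3" using exp_one_ge_two by (intro power_mono) auto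
  also have "\<dots> = exp 3" by (simp add: exp_of_nat_mult[symmetric])
  finally show ?thesis by (simp add: exp_minus inverse_eq_divide)
qed

lemma initial_radius_sq_le:
  fixes \<delta> A :: real and d N :: nat
  assumes A: "A \<ge> 1" and d: "d \<ge> 1"
  shows "(8*\<delta>*A*(real d * ln (5*A) + 3)/N)\<^sup>2 \<le> 576 * (\<delta>\<^sup>2 * A\<^sup>2 * (real d)\<^sup>2 * (ln (16*A))\<^sup>2) / (real N)\<^sup>2"
proof -
  define L where "L = ln (16*A)"
  have L2: "L \<ge> 2"
  proof -
    have "ln (16::real) \<le> ln (16*A)" using A by simp
    then show ?thesis using ln_16_ge_two unfolding L_def by linarith
  qed
  have l5: "ln (5*A) \<le> L" "0 \<le> ln (5*A)" using A by (auto simp: L_def)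
  have X: "real d * ln (5*A) + 3 \<le> 3 * real d * L"
  proof -
    have "real d * ln (5*A) \<le> real d * L" using l5 by (intro mult_left_mono) auto
    moreover have "3 \<le> 2 * real d * L"
    proof -
      have h: "1 * 2 \<le> real d * L" using d L2 by (intro mult_mono) auto
      show ?thesis using h by (simp only: mult.assoc; linarith)
    qed
    ultimately show ?thesis by simp
  qed
  have X0: "0 \<le> real d * ln (5*A) + 3" using l5 by simp
  have "(8*\<delta>*A*(real d * ln (5*A) + 3)/N)\<^sup>2 = (8*\<delta>*A)\<^sup>2 * (real d * ln (5*A) + 3)\<^sup>2 / (real N)\<^sup>2"
    by (simp add: power_divide power_mult_distrib)
  also have "\<dots> \<le> (8*\<delta>*A)\<^sup>2 * (3 * real d * L)\<^sup>2 / (real N)\<^sup>2"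
    using X X0 by (intro divide_right_mono mult_left_mono power_mono) auto
  also have "\<dots> = 576 * (\<delta>\<^sup>2 * A\<^sup>2 * (real d)\<^sup>2 * L\<^sup>2) / (real N)\<^sup>2"
    by (simp add: power_mult_distrib)
  finally show ?thesis by (simp add: L_def)
qed

lemma exponential_remainder_le:
  fixes A :: real and d N :: nat
  assumes A: "A \<ge> 1" and N: "N \<ge> 1"
    and N_large: "real N \<ge> 8 * real d * ln (32*A)"
  shows "(12*A)^d * (1/2)^N \<le> 16 / (real N)\<^sup>2"
proof -
  have "real d * ln (12*A) \<le> real d * ln (32*A)" using A by (intro mult_left_mono) auto
  then have a: "real d * ln (12*A) \<le> real N / 8" using N_large by simp
  have "exp (real d * ln (12*A)) = exp (ln (12*A))^d" by (rule exp_of_nat_mult)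
  then have "(12*A)^d = exp (real d * ln (12*A))" using A by simp
  also have "\<dots> \<le> exp (real N / 8)" using a by simp
  finally have e1: "(12*A)^d \<le> exp (real N / 8)" .
  have "exp (real N * ln 2) = exp (ln (2::real))^N" by (rule exp_of_nat_mult)
  then have "exp (real N * ln 2) = 2^N" by simp
  then have "(1/2::real)^N = exp (- (real N * ln 2))"
    by (simp add: exp_minus power_one_over inverse_eq_divide)
  also have "\<dots> \<le> exp (- (real N * (2/3)))"
  proof -
    have "real N * (2/3) \<le> real N * ln 2" by (rule mult_left_mono[OF ln2_ge_two_thirds]) simp
    then show ?thesis by simp
  qed
  finally have e2: "(1/2::real)^N \<le> exp (- (real N * (2/3)))" .
  have "(12*A)^d * (1/2)^N \<le> exp (real N / 8) * exp (- (real N * (2/3)))"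
    using e1 e2 by (intro mult_mono) auto
  also have "\<dots> = exp (real N / 8 - real N * (2/3))" by (simp add: exp_add[symmetric])
  also have "\<dots> \<le> exp (- (real N / 2))" by simp
  also have "\<dots> = 1 / exp (real N / 2)" by (simp add: exp_minus inverse_eq_divide)
  also have "\<dots> \<le> 1 / ((real N)\<^sup>2 / 16)"
    using N sq_div_16_le_exp_half[of "real N"] by (intro divide_left_mono) auto
  also have "\<dots> = 16 / (real N)\<^sup>2" by simp
  finally show ?thesis .
qed

lemma div_sq_le_div_Suc_Suc:
  assumes "N \<ge> (1::nat)" "B \<ge> 0"
  shows "B / (real N)\<^sup>2 \<le> 6 * B / ((real N + 1) * (real N + 2))"
proof -
  have "(5 * real N + 2) * (real N - 1) \<ge> 0" using assms by (intro mult_nonneg_nonneg) auto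
  then have "(real N + 1) * (real N + 2) \<le> 6 * (real N)\<^sup>2"
    by (simp add: algebra_simps power2_eq_square)
  moreover have "(real N + 1) * (real N + 2) > 0" by simp
  ultimately have "B / (6 * (real N)\<^sup>2) \<le> B / ((real N + 1) * (real N + 2))"
    using assms by (intro divide_left_mono) auto
  then have "6 * (B / (6 * (real N)\<^sup>2)) \<le> 6 * (B / ((real N + 1) * (real N + 2)))" by simp
  then show ?thesis by simp
qed

lemma second_moment_constants_le:
  fixes \<delta> A :: real and d N :: nat
  assumes A: "A \<ge> 1" and d: "d \<ge> 1" and N: "N \<ge> 1"
    and N_large: "real N \<ge> 8 * real d * ln (32*A)"
  shows "(8*\<delta>*A*(real d * ln (5*A) + 3)/N)\<^sup>2 + 3 * (8*\<delta>*A*(real d * ln (5*A) + 3)/N)\<^sup>2 / 4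
          + 96 * \<delta>\<^sup>2 * A\<^sup>2 * (12*A)^d * (1/2)^N
        \<le> 10000 * \<delta>\<^sup>2 * (real d)\<^sup>2 * A\<^sup>2 * (ln (16*A))\<^sup>2 / ((real N + 1) * (real N + 2))"
proof -
  define B where "B = \<delta>\<^sup>2 * A\<^sup>2 * (real d)\<^sup>2 * (ln (16*A))\<^sup>2"
  have "ln (16::real) \<le> ln (16*A)" using A by simp
  then have "1 * 2 \<le> real d * ln (16*A)" using d ln_16_ge_two by (intro mult_mono) auto
  then have "2^2 \<le> (real d * ln (16*A))^2" by (intro power_mono) auto
  then have "4 * (\<delta>\<^sup>2 * A\<^sup>2) \<le> (real d * ln (16*A))^2 * (\<delta>\<^sup>2 * A\<^sup>2)"
    by (intro mult_right_mono) auto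
  then have B_ge: "4 * (\<delta>\<^sup>2 * A\<^sup>2) \<le> B" by (simp add: B_def power_mult_distrib mult_ac)
  have "96 * \<delta>\<^sup>2 * A\<^sup>2 * ((12*A)^d * (1/2)^N) \<le> 96 * \<delta>\<^sup>2 * A\<^sup>2 * (16 / (real N)\<^sup>2)"
    using exponential_remainder_le[OF A N N_large] by (rule mult_left_mono) simp
  also have "\<dots> = 384 * (4 * (\<delta>\<^sup>2 * A\<^sup>2)) / (real N)\<^sup>2" by simp
  also have "\<dots> \<le> 384 * B / (real N)\<^sup>2"
    by (intro divide_right_mono mult_left_mono B_ge) auto
  finally have "96 * \<delta>\<^sup>2 * A\<^sup>2 * (12*A)^d * (1/2)^N \<le> 384 * (B / (real N)\<^sup>2)"
    by (simp add: mult.assoc)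
  moreover have "(8*\<delta>*A*(real d * ln (5*A) + 3)/N)\<^sup>2 \<le> 576 * (B / (real N)\<^sup>2)"
    using initial_radius_sq_le[OF A d, of \<delta> N] by (simp add: B_def mult_ac)
  moreover have B_nonneg: "B \<ge> 0" by (simp add: B_def)
  then have "B / (real N)\<^sup>2 \<le> 6 * (B / ((real N + 1) * (real N + 2)))"
    using N div_sq_le_div_Suc_Suc by simp
  moreover have "B / ((real N + 1) * (real N + 2)) \<ge> 0" using B_nonneg by simp
  ultimately have "(8*\<delta>*A*(real d * ln (5*A) + 3)/N)\<^sup>2 + 3 * (8*\<delta>*A*(real d * ln (5*A) + 3)/N)\<^sup>2 / 4
          + 96 * \<delta>\<^sup>2 * A\<^sup>2 * (12*A)^d * (1/2)^N \<le> 10000 * (B / ((real N + 1) * (real N + 2)))"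
    by linarith
  then show ?thesis by (simp add: B_def mult_ac)
qed

section \<open>Summing the dyadic layers\<close>

context anti_concentrated_model
begin

text \<open>For \<open>r \<le> 4\<delta>A\<close> the tail is at most \<open>(5A)\<^sup>d exp (- N r / (8\<delta>A))\<close>; the initial radius is
  where this drops to \<open>exp (-3)\<close>.\<close>

definition "initial_radius (N::nat) = 8*\<delta>*A*(real d * ln (5*A) + 3) / real N"

lemma initial_radius_pos:
  assumes "N > 0" shows "initial_radius N > 0"
proof -
  have "ln (5*A) \<ge> 0" using A_ge_1 by simp
  then have "0 < 8*\<delta>*A*(real d * ln (5*A) + 3)"
    using A_pos \<delta>_pos by (intro mult_pos_pos add_nonneg_pos) auto
  then show ?thesis using assms by (simp add: initial_radius_def)
qed

lemma tail_bound_small_radius_le: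
  assumes N: "N > 0" and small: "initial_radius N * 2^k \<le> 4*\<delta>*A"
  shows "tail_bound N (initial_radius N * 2^k) \<le> exp (-3) * exp (-3 * real k)"
proof -
  define X where "X = real d * ln (5*A) + 3"
  define x where "x = initial_radius N * 2^k / (8*\<delta>*A)"
  have dA: "0 < \<delta>*A" using A_pos \<delta>_pos by simp
  have X: "X \<ge> 3" using A_ge_1 by (simp add: X_def)
  have x: "0 \<le> x" "x \<le> 1" using small dA initial_radius_pos[OF N] by (auto simp: x_def field_simps)
  have Nx: "real N * x = 2^k * X" using N A_pos \<delta>_pos by (simp add: x_def initial_radius_def X_def field_simps)
  have "(1 - x)^N \<le> exp (-x)^N"
    using x by (intro power_mono) (auto simp: exp_ge_add_one_self[of "-x", simplified])
  also have "\<dots> = exp (- (2^k * X))" by (simp add: exp_of_nat_mult[symmetric] Nx[symmetric])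
  also have "\<dots> \<le> exp (- (X + 3*k))"
  proof -
    have "(2^k - 1) * 3 \<le> (2^k - 1) * X" using X real_Suc_le_two_power[of k] by (intro mult_left_mono) auto
    then have "X + 3 * k \<le> 2^k * X" using real_Suc_le_two_power[of k] by (simp add: algebra_simps)
    then show ?thesis by simp
  qed
  also have "\<dots> = exp (-3) * exp (-3 * real k) * exp (- (real d * ln (5*A)))"
    by (simp add: X_def flip: exp_add)
  also have "exp (- (real d * ln (5*A))) = 1 / (5*A)^d"
    using A_pos by (simp add: exp_minus exp_of_nat_mult inverse_eq_divide)
  finally have "(1 - x)^N \<le> exp (-3) * exp (-3 * real k) / (5*A)^d" by simp
  moreover have "(4*A+1)^d \<le> (5*A)^d" using A_ge_1 by (intro power_mono) auto
  ultimately have "(4*A+1)^d * (1 - x)^N \<le> (5*A)^d * (exp (-3) * exp (-3 * real k) / (5*A)^d)"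
    using x A_pos by (intro mult_mono) auto
  then show ?thesis using small A_pos by (simp add: tail_bound_def x_def)
qed

lemma dyadic_term_le_geometric:
  assumes N: "N > 0" and small: "initial_radius N * 2^k \<le> 4*\<delta>*A"
  shows "3 * (initial_radius N * 2^k)\<^sup>2 * tail_bound N (initial_radius N * 2^k)
    \<le> 3 * (initial_radius N)\<^sup>2 / 8 * (1/2)^k"
proof -
  have "4 * exp (-3::real) \<le> 1/2" using exp_minus_three_le by simp
  then have "(4 * exp (-3::real))^k \<le> (1/2)^k" by (intro power_mono) auto
  then have "4^k * exp (-3 * real k) \<le> (1/2::real)^k"
    by (simp add: power_mult_distrib exp_of_nat_mult[symmetric] mult.commute)
  then have "exp (-3) * (4^k * exp (-3 * real k)) \<le> 1/8 * (1/2::real)^k"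
    using exp_minus_three_le by (intro mult_mono) auto
  then have "4^k * (exp (-3) * exp (-3 * real k)) \<le> 1/8 * (1/2::real)^k" by (simp add: mult_ac)
  moreover have "4^k * tail_bound N (initial_radius N * 2^k) \<le> 4^k * (exp (-3) * exp (-3 * real k))"
    using tail_bound_small_radius_le[OF N small] by (rule mult_left_mono) simp
  ultimately have "4^k * tail_bound N (initial_radius N * 2^k) \<le> 1/8 * (1/2::real)^k" by linarith
  then have "3 * (initial_radius N)\<^sup>2 * (4^k * tail_bound N (initial_radius N * 2^k))
      \<le> 3 * (initial_radius N)\<^sup>2 * (1/8 * (1/2)^k)"
    by (intro mult_left_mono) auto
  then show ?thesis unfolding dyadic_sq by (simp add: mult_ac)
qed

lemma tail_bound_large_radius_le:
  assumes large: "4*\<delta>*A < r"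
  defines "\<rho> \<equiv> r / (4*\<delta>*A)"
  shows "tail_bound N r \<le> (12*A)^d * (1/2)^N * (\<rho>^d * \<rho> powr (-s * N))"
proof -
  have dA: "0 < \<delta>*A" using A_pos \<delta>_pos by simp
  have \<rho>: "\<rho> > 1" using large dA by (simp add: \<rho>_def field_simps)
  have r: "r = 4*\<delta>*A*\<rho>" "r > 0" using dA \<rho> by (auto simp: \<rho>_def)
  have "\<delta> \<le> r" using large \<delta>_pos mult_left_mono[OF A_ge_1, of "4*\<delta>"] by linarith
  then have "2*r/\<delta> + 1 \<le> 3*r/\<delta>" using \<delta>_pos by (simp add: field_simps)
  also have "3*r/\<delta> = 12*A*\<rho>" using \<delta>_pos by (simp add: r(1) field_simps)
  finally have net_size: "2*r/\<delta> + 1 \<le> 12*A*\<rho>" .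
  have "(3*\<delta>/r) powr s \<le> (1/(A*\<rho>)) powr s"
    using \<delta>_pos r s_pos A_pos \<rho> by (intro powr_mono2) (auto simp: r(1) field_simps)
  also have "\<dots> = 1 / (2*\<alpha> * \<rho> powr s)"
    using A_pos \<rho> by (simp add: powr_divide powr_mult A_pow)
  finally have "\<alpha> * (3*\<delta>/r) powr s \<le> \<alpha> * (1 / (2*\<alpha> * \<rho> powr s))"
    using \<alpha>_ge_1 by (intro mult_left_mono) auto
  also have "\<dots> = \<rho> powr (-s) / 2" using \<alpha>_ge_1 \<rho> by (simp add: powr_minus field_simps)
  finally have probability: "\<alpha> * (3*\<delta>/r) powr s \<le> \<rho> powr (-s) / 2" .
  have "tail_bound N r = (2*r/\<delta>+1)^d * (\<alpha> * (3*\<delta>/r) powr s)^N"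
    using large by (simp add: tail_bound_def)
  also have "\<dots> \<le> (12*A*\<rho>)^d * (\<rho> powr (-s) / 2)^N"
    using net_size probability \<alpha>_ge_1 \<delta>_pos r A_pos \<rho> by (intro mult_mono power_mono) auto
  also have "(\<rho> powr (-s))^N = \<rho> powr (-s * N)"
    using \<rho> by (subst powr_realpow[symmetric]) (simp_all add: powr_powr)
  then have "(12*A*\<rho>)^d * (\<rho> powr (-s) / 2)^N = (12*A)^d * (1/2)^N * (\<rho>^d * \<rho> powr (-s * N))"
    by (simp add: power_mult_distrib power_divide)
  finally show ?thesis .
qed

text \<open>Beyond \<open>4\<delta>A\<close> the dyadic terms telescope; \<open>clipped_ratio r\<^sub>0 k\<close> is \<open>4\<delta>A / (r\<^sub>0 2\<^sup>k)\<close>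
  capped at \<open>1\<close> so that the sum over all \<open>k\<close> is at most \<open>1\<close>.\<close>

definition "clipped_ratio r0 k = min 1 (4*\<delta>*A / (r0 * 2^k))"

lemma clipped_ratio_Suc_le: "r0 > 0 \<Longrightarrow> clipped_ratio r0 (Suc k) \<le> clipped_ratio r0 k"
  unfolding clipped_ratio_def using A_pos \<delta>_pos
  by (intro min.mono order.refl divide_left_mono) (auto simp: field_simps)

lemma suminf_clipped_ratio_diff_le:
  assumes K: "K \<ge> 0" and r0: "r0 > 0"
  shows "(\<Sum>k. ennreal (K * (clipped_ratio r0 k - clipped_ratio r0 (Suc k)))) \<le> ennreal K"
proof (rule suminf_le_const[OF summableI])
  fix n
  have "clipped_ratio r0 0 \<le> 1" "clipped_ratio r0 n \<ge> 0"
    using r0 A_pos \<delta>_pos by (auto simp: clipped_ratio_def)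
  then have "(\<Sum>k<n. K * (clipped_ratio r0 k - clipped_ratio r0 (Suc k))) \<le> K"
    using K by (simp add: sum_distrib_left[symmetric] sum_lessThan_telescope' mult_left_le)
  moreover have "K * (clipped_ratio r0 k - clipped_ratio r0 (Suc k)) \<ge> 0" for k
    using K clipped_ratio_Suc_le[OF r0, of k] by simp
  ultimately show "(\<Sum>k<n. ennreal (K * (clipped_ratio r0 k - clipped_ratio r0 (Suc k)))) \<le> ennreal K"
    by (simp add: sum_ennreal ennreal_leI)
qed

lemma dyadic_term_le_telescoping:
  assumes r0: "r0 > 0" and large: "4*\<delta>*A < r0 * 2^k" and sN: "s * real N \<ge> real d + 3"
  shows "3 * (r0 * 2^k)\<^sup>2 * tail_bound N (r0 * 2^k)
    \<le> 96 * \<delta>\<^sup>2 * A\<^sup>2 * (12*A)^d * (1/2)^N * (clipped_ratio r0 k - clipped_ratio r0 (Suc k))"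
proof -
  define r where "r = r0 * 2^k"
  define \<rho> where "\<rho> = r / (4*\<delta>*A)"
  have dA: "0 < \<delta>*A" using A_pos \<delta>_pos by simp
  have \<rho>: "\<rho> > 1" using large dA by (simp add: \<rho>_def r_def field_simps)
  have r_eq: "r = 4*\<delta>*A*\<rho>" using A_pos \<delta>_pos by (simp add: \<rho>_def)
  have "\<rho>^2 * (\<rho>^d * \<rho> powr (-s * N)) = \<rho> powr real 2 * (\<rho> powr real d * \<rho> powr (-s * N))"
    using \<rho> by (simp only: powr_realpow)
  also have "\<dots> = \<rho> powr (real d + 2 - s * N)"
    by (simp add: powr_add[symmetric] algebra_simps)
  also have "\<dots> \<le> \<rho> powr (-1)" using \<rho> sN by (intro powr_mono) auto
  also have "\<dots> = 1/\<rho>" using \<rho> by (simp add: powr_minus inverse_eq_divide)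
  finally have power_le: "\<rho>^2 * (\<rho>^d * \<rho> powr (-s * N)) \<le> 1/\<rho>" .
  have "r0 * 2^Suc k = 2*r" by (simp add: r_def)
  then have ratio: "clipped_ratio r0 k - clipped_ratio r0 (Suc k) = 1/(2*\<rho>)"
    using \<rho> dA by (simp add: clipped_ratio_def \<rho>_def r_def[symmetric] min_def field_simps)
  have "3 * r\<^sup>2 * tail_bound N r \<le> 3 * r\<^sup>2 * ((12*A)^d * (1/2)^N * (\<rho>^d * \<rho> powr (-s * N)))"
    using tail_bound_large_radius_le[of r N] large by (intro mult_left_mono) (auto simp: \<rho>_def r_def)
  also have "\<dots> = 48 * \<delta>\<^sup>2 * A\<^sup>2 * (12*A)^d * (1/2)^N * (\<rho>^2 * (\<rho>^d * \<rho> powr (-s * N)))"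
    by (simp add: r_eq power_mult_distrib)
  also have "\<dots> \<le> 48 * \<delta>\<^sup>2 * A\<^sup>2 * (12*A)^d * (1/2)^N * (1/\<rho>)"
    using power_le A_pos by (intro mult_left_mono) auto
  also have "\<dots> = 96 * \<delta>\<^sup>2 * A\<^sup>2 * (12*A)^d * (1/2)^N * (clipped_ratio r0 k - clipped_ratio r0 (Suc k))"
    unfolding ratio using \<rho> by (simp add: field_simps)
  finally show ?thesis by (simp add: r_def)
qed

end

context anti_concentrated_model
begin

lemma dyadic_series_le:
  assumes N: "N > 0" and sN: "s * real N \<ge> real d + 3"
  defines "r0 \<equiv> initial_radius N"
  shows "(\<Sum>k. ennreal (3 * (r0 * 2^k)\<^sup>2 * tail_bound N (r0 * 2^k)))
    \<le> ennreal (3 * r0\<^sup>2 / 4 + 96 * \<delta>\<^sup>2 * A\<^sup>2 * (12*A)^d * (1/2)^N)"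
proof -
  have r0: "r0 > 0" unfolding r0_def using N by (rule initial_radius_pos)
  define K where "K = 96 * \<delta>\<^sup>2 * A\<^sup>2 * (12*A)^d * (1/2::real)^N"
  define geometric where "geometric k = 3 * r0\<^sup>2 / 8 * (1/2::real)^k" for k
  define telescoping where "telescoping k = K * (clipped_ratio r0 k - clipped_ratio r0 (Suc k))" for k
  have K: "K \<ge> 0" using A_pos by (simp add: K_def)
  have geometric_nonneg: "geometric k \<ge> 0" for k by (simp add: geometric_def)
  have telescoping_nonneg: "telescoping k \<ge> 0" for k
    using K clipped_ratio_Suc_le[OF r0, of k] by (simp add: telescoping_def)
  have term_le: "3 * (r0 * 2^k)\<^sup>2 * tail_bound N (r0 * 2^k) \<le> geometric k + telescoping k" for k
  proof (cases "r0 * 2^k \<le> 4*\<delta>*A")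
    case True
    have "3 * (r0 * 2^k)\<^sup>2 * tail_bound N (r0 * 2^k) \<le> geometric k"
      using dyadic_term_le_geometric[OF N] True unfolding r0_def geometric_def by blast
    then show ?thesis using telescoping_nonneg[of k] by linarith
  next
    case False
    then have "3 * (r0 * 2^k)\<^sup>2 * tail_bound N (r0 * 2^k) \<le> telescoping k"
      using dyadic_term_le_telescoping[OF r0 _ sN, of k] unfolding telescoping_def K_def by simp
    then show ?thesis using geometric_nonneg[of k] by linarith
  qed
  have "summable geometric" unfolding geometric_def by (intro summable_mult summable_geometric) auto
  then have "(\<Sum>k. ennreal (geometric k)) = ennreal (\<Sum>k. geometric k)"
    using geometric_nonneg by (intro suminf_ennreal2) auto
  also have "(\<Sum>k. geometric k) = 3 * r0\<^sup>2 / 8 * 2"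
    unfolding geometric_def by (subst suminf_mult) (auto simp: suminf_geometric)
  finally have geometric_sum: "(\<Sum>k. ennreal (geometric k)) = ennreal (3 * r0\<^sup>2 / 8 * 2)" .
  have telescoping_sum: "(\<Sum>k. ennreal (telescoping k)) \<le> ennreal K"
    unfolding telescoping_def using K r0 by (rule suminf_clipped_ratio_diff_le)
  have "(\<Sum>k. ennreal (3 * (r0 * 2^k)\<^sup>2 * tail_bound N (r0 * 2^k)))
      \<le> (\<Sum>k. ennreal (geometric k)) + (\<Sum>k. ennreal (telescoping k))"
    using term_le geometric_nonneg telescoping_nonneg
    by (subst suminf_add[OF summableI summableI]) (auto intro!: suminf_le simp flip: ennreal_plus)
  also have "\<dots> \<le> ennreal (3 * r0\<^sup>2 / 8 * 2) + ennreal K"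
    unfolding geometric_sum using telescoping_sum by (rule add_left_mono)
  also have "\<dots> = ennreal (3 * r0\<^sup>2 / 4 + 96 * \<delta>\<^sup>2 * A\<^sup>2 * (12*A)^d * (1/2)^N)"
    using K by (simp add: K_def flip: ennreal_plus)
  finally show ?thesis .
qed

lemma sample_size_consequences:
  assumes N_large: "real N \<ge> 8 * real d * ln (32*A)"
  shows "N \<ge> 1" "s * real N \<ge> real d + 3"
proof -
  have "ln (2::real) \<le> ln (2*\<alpha>)" using \<alpha>_ge_1 by simp
  moreover have "s * ln A = ln (2*\<alpha>)" using s_pos \<alpha>_ge_1 by (simp add: A_def ln_powr)
  moreover have "s * ln A \<le> s * ln (32*A)" using s_pos A_pos by (intro mult_left_mono) auto
  ultimately have s_ln: "2/3 \<le> s * ln (32*A)" using ln2_ge_two_thirds by linarith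
  have "s * (8 * real d * ln (32*A)) \<le> s * real N" using N_large s_pos by (intro mult_left_mono) auto
  moreover have "8 * real d * (2/3) \<le> 8 * real d * (s * ln (32*A))" using s_ln by (intro mult_left_mono) auto
  ultimately have "8 * real d * (2/3) \<le> s * real N" by (simp add: algebra_simps)
  then show "s * real N \<ge> real d + 3" using d_ge_1 by simp
  then show "N \<ge> 1" using s_pos d_ge_1 by (cases N) auto
qed

lemma nn_integral_W_N_sq_le:
  assumes N_large: "real N \<ge> 8 * real d * ln (32*A)"
  shows "(\<integral>\<^sup>+\<omega>. (W_N d N \<delta> \<omega>)\<^sup>2 \<partial>\<Omega> N)
     \<le> ennreal (10000 * \<delta>\<^sup>2 * (real d)\<^sup>2 * A\<^sup>2 * (ln (16*A))\<^sup>2 / ((real N + 1) * (real N + 2)))"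
proof -
  note N = sample_size_consequences[OF N_large]
  define r0 where "r0 = initial_radius N"
  have r0: "r0 > 0" using N(1) by (simp add: r0_def initial_radius_pos)
  have "(\<integral>\<^sup>+\<omega>. (W_N d N \<delta> \<omega>)\<^sup>2 \<partial>\<Omega> N)
      \<le> ennreal (r0\<^sup>2) + (\<Sum>k. ennreal (3 * (r0 * 2^k)\<^sup>2 * tail_bound N (r0 * 2^k)))"
    by (rule nn_integral_W_N_sq_le_dyadic_sum[OF r0])
  also have "\<dots> \<le> ennreal (r0\<^sup>2) + ennreal (3 * r0\<^sup>2 / 4 + 96 * \<delta>\<^sup>2 * A\<^sup>2 * (12*A)^d * (1/2)^N)"
    using dyadic_series_le[OF _ N(2)] N(1) unfolding r0_def by (intro add_left_mono) simp
  also have "\<dots> = ennreal (r0\<^sup>2 + 3 * r0\<^sup>2 / 4 + 96 * \<delta>\<^sup>2 * A\<^sup>2 * (12*A)^d * (1/2)^N)"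
    using A_pos by (simp add: ennreal_plus[symmetric] add.assoc del: ennreal_plus)
  also have "\<dots> \<le> ennreal (10000 * \<delta>\<^sup>2 * (real d)\<^sup>2 * A\<^sup>2 * (ln (16*A))\<^sup>2 / ((real N + 1) * (real N + 2)))"
    using second_moment_constants_le[OF A_ge_1 d_ge_1 N(1) N_large]
    by (intro ennreal_leI) (simp add: r0_def initial_radius_def)
  finally show ?thesis .
qed

end

lemma W_N_second_moment_le:
  fixes d :: nat and \<delta> :: real and \<mu> :: "(nat \<Rightarrow> real) measure" and \<alpha> s :: real and N :: nat
  assumes "d \<ge> 1" "\<delta> > 0" "prob_space \<mu>" "sets \<mu> = sets (Rd d)" "AE v in \<mu>. v \<in> sphere_d d"
    "\<alpha> \<ge> 1" "s > 0"
    "\<forall>x \<in> sphere_d d. \<forall>t \<in> {0..1}. measure \<mu> {v \<in> space \<mu>. \<bar>inner_d d x v\<bar> \<le> t} \<le> \<alpha> * t powr s"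
    and N_large: "real N \<ge> 8 * real d * ln (32 * (2 * \<alpha>) powr (1 / s))"
  shows "(\<integral>\<^sup>+ \<omega>. (W_N d N \<delta> \<omega>)\<^sup>2 \<partial>sample_law N \<mu> \<delta>)
      \<le> ennreal (10000 * \<delta>\<^sup>2 * (real d)\<^sup>2 * (2 * \<alpha>) powr (2 / s)
                 * (ln (16 * (2 * \<alpha>) powr (1 / s)))\<^sup>2 / ((real N + 1) * (real N + 2)))"
proof -
  interpret anti_concentrated_model d \<delta> \<mu> \<alpha> s
    using assms by (intro anti_concentrated_model.intro measurement_model.intro anti_concentrated_model_axioms.intro)
  have "A\<^sup>2 = (2*\<alpha>) powr (2/s)"
    using A_pos by (simp add: A_def powr_realpow[symmetric] powr_powr)
  then show ?thesis using nn_integral_W_N_sq_le N_large by (simp add: A_def)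
qed

theorem corollary5p6:
  shows "\<exists>c1>0. \<exists>c2>0. \<forall>(d::nat) (\<delta>::real) (\<mu>::(nat \<Rightarrow> real) measure) (\<alpha>::real) (s::real) (N::nat).
    d \<ge> 1 \<and> \<delta> > 0 \<and> prob_space \<mu> \<and> sets \<mu> = sets (Rd d) \<and>
    (AE v in \<mu>. v \<in> sphere_d d) \<and>
    \<alpha> \<ge> 1 \<and> s > 0 \<and>
    (\<forall>x \<in> sphere_d d. \<forall>t \<in> {0..1}.
        measure \<mu> {v \<in> space \<mu>. \<bar>inner_d d x v\<bar> \<le> t} \<le> \<alpha> * t powr s) \<and>
    real N \<ge> c2 * real d * ln (32 * (2 * \<alpha>) powr (1 / s))
    \<longrightarrow>
    (\<integral>\<^sup>+ \<omega>. (W_N d N \<delta> \<omega>)\<^sup>2 \<partial>sample_law N \<mu> \<delta>)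
      \<le> ennreal (c1 * \<delta>\<^sup>2 * (real d)\<^sup>2 * (2 * \<alpha>) powr (2 / s)
                 * (ln (16 * (2 * \<alpha>) powr (1 / s)))\<^sup>2
                 / ((real N + 1) * (real N + 2)))"
  by (intro exI[of _ "10000::real"] exI[of _ "8::real"] conjI zero_less_numeral allI impI, elim conjE)
    (rule W_N_second_moment_le)

end
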